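(* Suppose that $f\in E^2$, $n\in\mathbb N$, $T>1$ and $M>1$. Then for any $0\le a<b\le1$ and $z\in\mathbb R^2$ such that $\|z-f(a)\|<1/n^2$, \[\mathbb Q\big(\xi^T|_{[a,b]}\in\Lambda_{M,T}(f,n)|_{[a,b]}\,\big|\,\xi^T(a)=z\big)\le\exp\Big(-T\sum_{j=\lfloor an\rfloor}^{\lceil bn\rceil-1}\big(\mathcal E^+_X(I_j\cap[a,b],\Lambda_{M,T}(f,n),T)+\mathcal E^+_Y(I_j\cap[a,b],\Lambda_{M,T}(f,n),T)\big)\Big).\]
   Context: Let $R(x,y)=\frac{x+1}{y+1}\vee\frac{y+1}{x+1}$, $P(x,y)=\frac{y+1}{2(x+1)}\mathbb 1_{x\ge y}+(1-\frac{x+1}{2(y+1)})\mathbb 1_{x<y}$, $R_X=RP$, $R_Y=R(1-P)$. Under $\mathbb Q$, $(\xi_t)_{t\ge0}$ is a Markov process in $\mathbb R^2$ with $\xi_0=0$ which, in state $z$, jumps at rate $2R(z)$, each jump being $(\mathbbm e,0)$ with probability $P(z)$ and $(0,\mathbbm e)$ otherwise, $\mathbbm e\sim$ Exp(1) independent. $\xi^T(s)=\xi(sT)/T$; conditioning on $\xi^T(a)=z$ means considering the process from time $aT$ onwards started at $Tz$. For $F\subset E^2$, $h\in F|_I$ iff some $g\in F$ agrees with $h$ on $I$. $\|\cdot\|$ max norm on $\mathbb R^2$. $I_j=[j/n,(j+1)/n]$. $E$: non-decreasing càdlàg $f:[0,1]\to\mathbb R$ with $f(0)=0$. $G_{M,T}=\{f\in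 E:s/M-2T^{-2/3}\le f(s)\le M(s+2T^{-2/3})\ \forall s\}$; $\rho(f,g)=\sup_s\|f(s)-g(s)\|$; $\Lambda_{M,T}(f,n)=B_\rho(f,1/n^2)\cap G_{M,T}^2$. For a non-empty interval $I\subset[0,1]$ with infimum $I^-$, supremum $I^+$, length $|I|$, $F\subset E^2$, $T\ge1$: $R^-_X(I,F,T)=\inf\{R_X(Tg(s)):s\in I,g\in F\}$, $R^+_X(I,F,T)$ the sup, similarly $R^\pm_Y$; $x^-(s,F)=\inf\{g_X(s):g\in F\}$, $x^+(s,F)=\sup\{g_X(s):g\in F\}$, similarly $y^\pm$. "$X-$ case": $2R^-_X|I|>x^+(I^+,F)-x^-(I^-,F)$; "$X+$ case": $x^-(I^+,F)-x^+(I^-,F)>2R^+_X|I|$. $\mathcal E^+_X(I,F,T)=(\sqrt{2R^-_X(I,F,T)|I|}-\sqrt{x^+(I^+,F)-x^-(I^-,F)})^2$ in the $X-$ case, $(\sqrt{2R^+_X(I,F,T)|I|}-\sqrt{x^-(I^+,F)-x^+(I^-,F)})^2$ in the $X+$ case, $0$ otherwise; $\mathcal E^+_Y$ analogously with $R^\pm_Y,y^\pm$. *)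

theory Defs
  imports "HOL-Probability.Probability"
begin

type_synonym pt = "real \<times> real"

definition RR :: "pt \<Rightarrow> real" where
  "RR z = max ((fst z + 1) / (snd z + 1)) ((snd z + 1) / (fst z + 1))"

definition PP :: "pt \<Rightarrow> real" where
  "PP z = (if fst z \<ge> snd z then (snd z + 1) / (2 * (fst z + 1))
           else 1 - (fst z + 1) / (2 * (snd z + 1)))"

definition RX :: "pt \<Rightarrow> real" where "RX z = RR z * PP z"
definition RY :: "pt \<Rightarrow> real" where "RY z = RR z * (1 - PP z)"

definition mnorm :: "pt \<Rightarrow> real" where "mnorm z = max \<bar>fst z\<bar> \<bar>snd z\<bar>"

text \<open>Driving randomness: an i.i.d. sequence of triples (U_k, V_k, W_k), U_k ~ Exp(1)
 (holding times), V_k ~ Uniform[0,1] (direction), W_k ~ Exp(1) (jump sizes).\<close>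

definition Dstep :: "(real \<times> real \<times> real) measure" where
  "Dstep = density lborel (exponential_density 1) \<Otimes>\<^sub>M
           (uniform_measure lborel {0..1} \<Otimes>\<^sub>M density lborel (exponential_density 1))"

definition QQ :: "(nat \<Rightarrow> real \<times> real \<times> real) measure" where
  "QQ = PiM UNIV (\<lambda>_. Dstep)"

fun chain :: "pt \<Rightarrow> (nat \<Rightarrow> real \<times> real \<times> real) \<Rightarrow> nat \<Rightarrow> pt" where
  "chain w \<omega> 0 = w"
| "chain w \<omega> (Suc k) =
     (let z = chain w \<omega> k; (U, V, W) = \<omega> k in
      if V < PP z then (fst z + W, snd z) else (fst z, snd z + W))"

text \<open>Jump times: in state z the holding time is Exp(2 R(z)).\<close>
fun jtime :: "pt \<Rightarrow> (nat \<Rightarrow> real \<times> real \<times> real) \<Rightarrow> nat \<Rightarrow> real" where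
  "jtime w \<omega> 0 = 0"
| "jtime w \<omega> (Suc k) = jtime w \<omega> k + fst (\<omega> k) / (2 * RR (chain w \<omega> k))"

text \<open>Number of jumps by time t (a state with non-positive rate is treated as absorbing).\<close>
definition njumps :: "pt \<Rightarrow> (nat \<Rightarrow> real \<times> real \<times> real) \<Rightarrow> real \<Rightarrow> nat" where
  "njumps w \<omega> t = (LEAST k. \<not> (RR (chain w \<omega> k) > 0 \<and> jtime w \<omega> (Suc k) \<le> t))"

definition xi :: "pt \<Rightarrow> (nat \<Rightarrow> real \<times> real \<times> real) \<Rightarrow> real \<Rightarrow> pt" where
  "xi w \<omega> t = chain w \<omega> (njumps w \<omega> t)"

type_synonym path2 = "(real \<Rightarrow> real) \<times> (real \<Rightarrow> real)"

definition at2 :: "path2 \<Rightarrow> real \<Rightarrow> pt" where "at2 g s = (fst g s, snd g s)"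

definition cadlag01 :: "(real \<Rightarrow> real) \<Rightarrow> bool" where
  "cadlag01 f \<longleftrightarrow> (\<forall>s\<in>{0..<1}. continuous (at_right s) f) \<and>
                   (\<forall>s\<in>{0<..1}. \<exists>l. (f \<longlongrightarrow> l) (at_left s))"

definition EE :: "(real \<Rightarrow> real) set" where
  "EE = {f. mono_on {0..1} f \<and> cadlag01 f \<and> f 0 = 0}"

definition GG :: "real \<Rightarrow> real \<Rightarrow> (real \<Rightarrow> real) set" where
  "GG M T = {f \<in> EE. \<forall>s\<in>{0..1}.
      s / M - 2 * T powr (-2/3) \<le> f s \<and> f s \<le> M * (s + 2 * T powr (-2/3))}"

definition rho :: "path2 \<Rightarrow> path2 \<Rightarrow> real" where
  "rho f g = (SUP s\<in>{0..1}. mnorm (at2 f s - at2 g s))"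

definition Lam :: "real \<Rightarrow> real \<Rightarrow> path2 \<Rightarrow> nat \<Rightarrow> path2 set" where
  "Lam M T f n = {g \<in> EE \<times> EE. rho f g < 1 / (real n)^2} \<inter> (GG M T \<times> GG M T)"

definition RXm :: "real set \<Rightarrow> path2 set \<Rightarrow> real \<Rightarrow> real" where
  "RXm I F T = Inf {RX (T *\<^sub>R at2 g s) | s g. s \<in> I \<and> g \<in> F}"
definition RXp :: "real set \<Rightarrow> path2 set \<Rightarrow> real \<Rightarrow> real" where
  "RXp I F T = Sup {RX (T *\<^sub>R at2 g s) | s g. s \<in> I \<and> g \<in> F}"
definition RYm :: "real set \<Rightarrow> path2 set \<Rightarrow> real \<Rightarrow> real" where
  "RYm I F T = Inf {RY (T *\<^sub>R at2 g s) | s g. s \<in> I \<and> g \<in> F}"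
definition RYp :: "real set \<Rightarrow> path2 set \<Rightarrow> real \<Rightarrow> real" where
  "RYp I F T = Sup {RY (T *\<^sub>R at2 g s) | s g. s \<in> I \<and> g \<in> F}"

definition xm :: "real \<Rightarrow> path2 set \<Rightarrow> real" where "xm s F = Inf {fst g s | g. g \<in> F}"
definition xp :: "real \<Rightarrow> path2 set \<Rightarrow> real" where "xp s F = Sup {fst g s | g. g \<in> F}"
definition ym :: "real \<Rightarrow> path2 set \<Rightarrow> real" where "ym s F = Inf {snd g s | g. g \<in> F}"
definition yp :: "real \<Rightarrow> path2 set \<Rightarrow> real" where "yp s F = Sup {snd g s | g. g \<in> F}"

text \<open>I^- = Inf I, I^+ = Sup I, |I| = Sup I - Inf I.\<close>
definition EXp :: "real set \<Rightarrow> path2 set \<Rightarrow> real \<Rightarrow> real" where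
  "EXp I F T =
    (let L = Sup I - Inf I in
     if 2 * RXm I F T * L > xp (Sup I) F - xm (Inf I) F
       then (sqrt (2 * RXm I F T * L) - sqrt (xp (Sup I) F - xm (Inf I) F))^2
     else if xm (Sup I) F - xp (Inf I) F > 2 * RXp I F T * L
       then (sqrt (2 * RXp I F T * L) - sqrt (xm (Sup I) F - xp (Inf I) F))^2
     else 0)"

definition EYp :: "real set \<Rightarrow> path2 set \<Rightarrow> real \<Rightarrow> real" where
  "EYp I F T =
    (let L = Sup I - Inf I in
     if 2 * RYm I F T * L > yp (Sup I) F - ym (Inf I) F
       then (sqrt (2 * RYm I F T * L) - sqrt (yp (Sup I) F - ym (Inf I) F))^2
     else if ym (Sup I) F - yp (Inf I) F > 2 * RYp I F T * L
       then (sqrt (2 * RYp I F T * L) - sqrt (ym (Sup I) F - yp (Inf I) F))^2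
     else 0)"

text \<open>Q(xi^T restricted to [a,b] in F restricted to [a,b] | xi^T(a) = z): the process is
  restarted at time aT from Tz, so xi^T(s) = xi_{Tz}((s-a)T)/T for s in [a,b].\<close>
definition cond_prob :: "real \<Rightarrow> real \<Rightarrow> real \<Rightarrow> pt \<Rightarrow> path2 set \<Rightarrow> real" where
  "cond_prob T a b z F = measure QQ
     {\<omega> \<in> space QQ. \<exists>g\<in>F. \<forall>s\<in>{a..b}.
         (1 / T) *\<^sub>R xi (T *\<^sub>R z) \<omega> ((s - a) * T) = at2 g s}"

end

theory Submission
  imports Defs
begin

text \<open>Exponential Chebyshev bound. Fix tilts \<open>\<theta>\<^sub>j, \<phi>\<^sub>j > -1\<close> for the blocks \<open>I\<^sub>j\<close>.
  Along the jump chain, the product of the factors \<open>exp (- \<theta> \<Delta>x - \<phi> \<Delta>y)\<close> over the jumps,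
  times \<open>exp\<close> of the compensator \<open>\<integral> 2 R (1 - P / (1 + \<theta>) - (1 - P) / (1 + \<phi>))\<close>, has mean one,
  because \<open>E exp (- \<theta> W) = 1 / (1 + \<theta>)\<close> for \<open>W \<sim> Exp(1)\<close>. If the rescaled path follows some
  \<open>g \<in> \<Lambda>\<close>, then on each block the rates lie in \<open>[R\<^sup>-, R\<^sup>+]\<close> and the displacements between
  \<open>x\<^sup>-(I\<^sup>+) - x\<^sup>+(I\<^sup>-)\<close> and \<open>x\<^sup>+(I\<^sup>+) - x\<^sup>-(I\<^sup>-)\<close>, which bounds the product from below by
  \<open>exp (T \<Sum>\<^sub>j gain\<^sub>j)\<close>; Markov's inequality turns this into the probability bound
  \<open>exp (- T \<Sum>\<^sub>j gain\<^sub>j)\<close>. Optimising each \<open>\<theta>\<^sub>j\<close> makes \<open>gain\<^sub>j\<close> the Legendre-type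
  expression \<open>(\<surd>(2 R L) - \<surd>D)\<^sup>2\<close>, i.e. \<open>\<E>\<^sup>+\<close>, up to an arbitrarily small error.\<close>

section \<open>The driving measure and the jump chain\<close>

abbreviation borel_pt :: "pt measure" where
  "borel_pt \<equiv> borel \<Otimes>\<^sub>M borel"

abbreviation borel_step :: "(real \<times> real \<times> real) measure" where
  "borel_step \<equiv> borel \<Otimes>\<^sub>M (borel \<Otimes>\<^sub>M borel)"

abbreviation Exp1 :: "real measure" where
  "Exp1 \<equiv> density lborel (exponential_density 1)"

abbreviation Unif01 :: "real measure" where
  "Unif01 \<equiv> uniform_measure lborel {0..1}"

lemma sets_Dstep: "sets Dstep = sets borel_step"
  unfolding Dstep_def by (simp cong: sets_pair_measure_cong)

lemma prob_space_Dstep: "prob_space Dstep"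
  unfolding Dstep_def
  by (intro prob_space_pair prob_space_exponential_density prob_space_uniform_measure) auto

lemma prob_space_QQ: "prob_space QQ"
  unfolding QQ_def by (intro prob_space_PiM prob_space_Dstep)

lemma measurable_QQ_component[measurable]: "(\<lambda>\<omega>. \<omega> k) \<in> measurable QQ borel_step"
proof -
  have "(\<lambda>\<omega>. \<omega> k) \<in> measurable QQ Dstep"
    unfolding QQ_def by (rule measurable_component_singleton) simp
  thus ?thesis by (simp only: measurable_cong_sets[OF refl sets_Dstep])
qed

lemma nn_integral_QQ_case_nat:
  assumes f[measurable]: "f \<in> borel_measurable QQ"
  shows "(\<integral>\<^sup>+\<omega>. f \<omega> \<partial>QQ) = (\<integral>\<^sup>+x. (\<integral>\<^sup>+\<omega>. f (case_nat x \<omega>) \<partial>QQ) \<partial>Dstep)"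
proof -
  interpret D: prob_space Dstep by (rule prob_space_Dstep)
  interpret S: sequence_space Dstep ..
  have fm: "f \<in> borel_measurable (\<Pi>\<^sub>M i::nat\<in>UNIV. Dstep)" using f unfolding QQ_def .
  have "(\<integral>\<^sup>+\<omega>. f \<omega> \<partial>QQ) = (\<integral>\<^sup>+X. f ((\<lambda>(s, \<omega>). case_nat s \<omega>) X) \<partial>(Dstep \<Otimes>\<^sub>M S.S))"
    unfolding QQ_def using fm by (subst S.PiM_iter[symmetric]) (simp add: nn_integral_distr)
  also have "\<dots> = (\<integral>\<^sup>+x. \<integral>\<^sup>+X. f (case_nat x X) \<partial>S.S \<partial>Dstep)"
  proof -
    have "(\<lambda>X. f (case_nat (fst X) (snd X))) \<in> borel_measurable (Dstep \<Otimes>\<^sub>M S.S)"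
      using fm by measurable
    from S.nn_integral_fst[OF this] show ?thesis by (simp add: split_beta)
  qed
  finally show ?thesis unfolding QQ_def by simp
qed

lemma AE_Exp1_pos: "AE U in Exp1. 0 < U"
proof -
  have "AE U in lborel. 0 < exponential_density 1 U \<longrightarrow> 0 < U"
    using AE_lborel_singleton[of 0] by eventually_elim (auto simp: exponential_density_def)
  thus ?thesis by (subst AE_density) auto
qed

lemma AE_Dstep_pos: "AE x in Dstep. 0 < fst x \<and> 0 < snd (snd x)"
proof -
  interpret E: prob_space Exp1 by (rule prob_space_exponential_density) simp
  interpret U: prob_space Unif01 by (intro prob_space_uniform_measure) auto
  interpret UE: prob_space "Unif01 \<Otimes>\<^sub>M Exp1" by (intro prob_space_pair U.prob_space_axioms E.prob_space_axioms)
  interpret P1: pair_sigma_finite Exp1 "Unif01 \<Otimes>\<^sub>M Exp1" ..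
  interpret P2: pair_sigma_finite Unif01 Exp1 ..
  have "AE y in Unif01 \<Otimes>\<^sub>M Exp1. 0 < snd y"
    by (rule P2.AE_pair_measure) (measurable, simp add: AE_Exp1_pos)
  thus ?thesis unfolding Dstep_def
    by (intro P1.AE_pair_measure) (measurable, auto simp: AE_Exp1_pos elim!: eventually_mono)
qed

lemma AE_QQ_steps_pos: "AE \<omega> in QQ. \<forall>i. 0 < fst (\<omega> i) \<and> 0 < snd (snd (\<omega> i))"
  unfolding AE_all_countable QQ_def
  by (intro allI AE_PiM_component[OF prob_space_Dstep _ AE_Dstep_pos]) simp

definition jump :: "pt \<Rightarrow> real \<times> real \<times> real \<Rightarrow> pt" where
  "jump z x = (if fst (snd x) < PP z then (fst z + snd (snd x), snd z)
               else (fst z, snd z + snd (snd x)))"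

lemma chain_Suc_jump: "chain w \<omega> (Suc k) = jump (chain w \<omega> k) (\<omega> k)"
  by (simp add: jump_def Let_def split: prod.splits)

declare chain.simps(2)[simp del]

lemma chain_Suc_shift: "chain w \<omega> (Suc k) = chain (jump w (\<omega> 0)) (\<lambda>i. \<omega> (Suc i)) k"
  by (induction k) (simp_all add: chain_Suc_jump)

lemma jtime_Suc_shift:
  "jtime w \<omega> (Suc k) = fst (\<omega> 0) / (2 * RR w) + jtime (jump w (\<omega> 0)) (\<lambda>i. \<omega> (Suc i)) k"
  by (induction k) (simp_all add: chain_Suc_shift)

lemma measurable_RR[measurable]: "RR \<in> borel_measurable borel_pt"
  unfolding RR_def by measurable

lemma measurable_PP[measurable]: "PP \<in> borel_measurable borel_pt"
  unfolding PP_def by measurable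

lemma measurable_RX[measurable]: "RX \<in> borel_measurable borel_pt"
  unfolding RX_def by measurable

lemma measurable_RY[measurable]: "RY \<in> borel_measurable borel_pt"
  unfolding RY_def by measurable

lemma measurable_jump[measurable (raw)]:
  assumes [measurable]: "f \<in> measurable M borel_pt" "h \<in> measurable M borel_step"
  shows "(\<lambda>x. jump (f x) (h x)) \<in> measurable M borel_pt"
  unfolding jump_def by measurable

lemma measurable_chain[measurable]: "(\<lambda>\<omega>. chain w \<omega> k) \<in> measurable QQ borel_pt"
  by (induction k) (simp_all add: chain_Suc_jump space_pair_measure)

lemma measurable_jtime[measurable]: "(\<lambda>\<omega>. jtime w \<omega> k) \<in> borel_measurable QQ"
  by (induction k) simp_all

section \<open>Exponential tilting of the jump process\<close>

lemma nn_integral_exponential_density: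
  assumes "l > 0"
  shows "(\<integral>\<^sup>+x. ennreal (exponential_density l x) \<partial>lborel) = 1"
proof -
  interpret prob_space "density lborel (exponential_density l)"
    by (rule prob_space_exponential_density[OF assms])
  show ?thesis using emeasure_space_1 by (simp add: emeasure_density)
qed

lemma nn_integral_Exp1_exp:
  fixes a :: real
  assumes a: "a > -1"
  shows "(\<integral>\<^sup>+W. ennreal (exp (- (a * W))) \<partial>Exp1) = ennreal (1 / (1 + a))"
proof -
  have "(\<integral>\<^sup>+W. ennreal (exp (- (a * W))) \<partial>Exp1)
      = (\<integral>\<^sup>+W. ennreal (exponential_density 1 W) * ennreal (exp (- a * W)) \<partial>lborel)"
    by (subst nn_integral_density) auto
  also have "\<dots> = (\<integral>\<^sup>+W. ennreal (1 / (1 + a)) * ennreal (exponential_density (1 + a) W) \<partial>lborel)"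
  proof (rule nn_integral_cong)
    fix W :: real
    have "exponential_density 1 W * exp (- a * W) = 1 / (1 + a) * exponential_density (1 + a) W"
      using a by (auto simp: exponential_density_def field_simps mult_exp_exp algebra_simps)
    thus "ennreal (exponential_density 1 W) * ennreal (exp (- a * W))
        = ennreal (1 / (1 + a)) * ennreal (exponential_density (1 + a) W)"
      using a by (simp add: ennreal_mult'[symmetric] exponential_density_nonneg)
  qed
  also have "\<dots> = ennreal (1 / (1 + a))"
    using a by (simp add: nn_integral_cmult nn_integral_exponential_density)
  finally show ?thesis .
qed

lemma nn_integral_jump_laplace:
  fixes a b P :: real
  assumes a: "a > -1" and b: "b > -1" and P: "0 \<le> P" "P \<le> 1"
  shows "(\<integral>\<^sup>+y. ennreal (if fst y < P then exp (- a * snd y) else exp (- b * snd y)) \<partial>(Unif01 \<Otimes>\<^sub>M Exp1))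
       = ennreal (P / (1 + a) + (1 - P) / (1 + b))"
proof -
  interpret E: prob_space Exp1 by (rule prob_space_exponential_density) simp
  have "(\<integral>\<^sup>+y. ennreal (if fst y < P then exp (- a * snd y) else exp (- b * snd y)) \<partial>(Unif01 \<Otimes>\<^sub>M Exp1))
      = (\<integral>\<^sup>+V. \<integral>\<^sup>+W. ennreal (if V < P then exp (- a * W) else exp (- b * W)) \<partial>Exp1 \<partial>Unif01)"
    by (subst E.nn_integral_fst[symmetric]) (auto intro!: nn_integral_cong)
  also have "\<dots> = (\<integral>\<^sup>+V. ennreal (if V < P then 1 / (1 + a) else 1 / (1 + b)) \<partial>Unif01)"
    by (rule nn_integral_cong) (auto simp: nn_integral_Exp1_exp a b)
  also have "\<dots> = (\<integral>\<^sup>+V. ennreal (if V < P then 1 / (1 + a) else 1 / (1 + b)) * indicator {0..1} V \<partial>lborel)"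
    by (subst nn_integral_uniform_measure) (auto simp: divide_ennreal_def)
  also have "\<dots> = (\<integral>\<^sup>+V. ennreal (1 / (1 + a)) * indicator {0..<P} V
                         + ennreal (1 / (1 + b)) * indicator {P..1} V \<partial>lborel)"
    using P by (intro nn_integral_cong) (auto split: split_indicator)
  also have "\<dots> = ennreal (1 / (1 + a)) * P + ennreal (1 / (1 + b)) * (1 - P)"
    using P by (subst nn_integral_add) (auto simp: nn_integral_cmult_indicator)
  also have "\<dots> = ennreal (P / (1 + a) + (1 - P) / (1 + b))"
    using P a b by (simp add: ennreal_mult'[symmetric] ennreal_plus[symmetric] del: ennreal_plus)
  finally show ?thesis .
qed

definition nonneg_pt :: "pt \<Rightarrow> bool" where
  "nonneg_pt w \<longleftrightarrow> 0 \<le> fst w \<and> 0 \<le> snd w"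

lemma measurable_nonneg_pt[measurable (raw)]:
  assumes [measurable]: "f \<in> measurable M borel_pt"
  shows "Measurable.pred M (\<lambda>x. nonneg_pt (f x))"
  unfolding nonneg_pt_def by measurable

lemma RR_ge_1:
  assumes "nonneg_pt w"
  shows "RR w \<ge> 1"
proof -
  have "fst w + 1 > 0" "snd w + 1 > 0" using assms unfolding nonneg_pt_def by auto
  thus ?thesis unfolding RR_def
    by (cases "fst w \<le> snd w") (simp_all add: le_max_iff_disj)
qed

lemma PP_bounds:
  assumes "nonneg_pt w"
  shows "0 < PP w" "PP w < 1"
  using assms unfolding nonneg_pt_def PP_def by (auto simp: field_simps)

lemma RX_RY_bounds:
  assumes "nonneg_pt w" "fst w \<le> B" "snd w \<le> B"
  shows "0 < RX w" "RX w \<le> B + 1" "0 < RY w" "RY w \<le> B + 1"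
proof -
  have P: "0 < PP w" "PP w < 1" by (rule PP_bounds[OF assms(1)])+
  have R1: "RR w \<ge> 1" by (rule RR_ge_1[OF assms(1)])
  have x: "0 \<le> fst w" "0 \<le> snd w" using assms(1) unfolding nonneg_pt_def by auto
  have "(fst w + 1) / (snd w + 1) \<le> fst w + 1" "(snd w + 1) / (fst w + 1) \<le> snd w + 1"
    using x by (simp_all add: divide_le_eq field_simps)
  hence RB: "RR w \<le> B + 1" unfolding RR_def using assms by auto
  show "0 < RX w" "0 < RY w" unfolding RX_def RY_def using P R1 by auto
  have "RR w * PP w \<le> RR w" "RR w * (1 - PP w) \<le> RR w" using P R1 by simp_all
  thus "RX w \<le> B + 1" "RY w \<le> B + 1" unfolding RX_def RY_def using RB by simp_all
qed

definition overlap :: "real \<Rightarrow> real \<Rightarrow> real \<Rightarrow> real \<Rightarrow> real" where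
  "overlap t s p q = max 0 (min s q - max t p)"

lemma overlap_same[simp]: "overlap t t p q = 0"
  unfolding overlap_def by simp

lemma overlap_nonneg: "0 \<le> overlap t s p q"
  unfolding overlap_def by simp

lemma overlap_add: "u \<le> v \<Longrightarrow> v \<le> w \<Longrightarrow> overlap u v p q + overlap v w p q = overlap u w p q"
  unfolding overlap_def by (simp add: max_def min_def)

lemma overlap_has_derivative:
  assumes "s \<noteq> max t p" "s \<noteq> q"
  shows "((\<lambda>s. overlap t s p q) has_real_derivative (if max t p < s \<and> s < q then 1 else 0)) (at s)"
proof -
  define m where "m = max t p"
  have e: "overlap t s' p q = max 0 (min s' q - m)" for s' unfolding overlap_def m_def ..
  consider "s < m" | "m < s" "s < q" | "m < s" "q < s" using assms unfolding m_def by linarith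
  thus ?thesis
  proof cases
    case 1
    have "((\<lambda>s. 0) has_real_derivative (if max t p < s \<and> s < q then 1 else 0)) (at s)"
      using 1 by (auto simp: m_def)
    thus ?thesis
      by (rule has_field_derivative_transform_within_open[where S="{..<m}"])
         (use 1 in \<open>auto simp: e m_def\<close>)
  next
    case 2
    have "((\<lambda>s. s - m) has_real_derivative (if max t p < s \<and> s < q then 1 else 0)) (at s)"
      using 2 by (auto simp: m_def intro!: derivative_eq_intros)
    thus ?thesis
      by (rule has_field_derivative_transform_within_open[where S="{m<..<q}"])
         (use 2 in \<open>auto simp: e m_def\<close>)
  next
    case 3
    have "((\<lambda>s. max 0 (q - m)) has_real_derivative (if max t p < s \<and> s < q then 1 else 0)) (at s)"
      using 3 by (auto simp: m_def)
    thus ?thesis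
      by (rule has_field_derivative_transform_within_open[where S="{max m q<..}"])
         (use 3 in \<open>auto simp: e m_def\<close>)
  qed
qed

lemma tilted_rate_identity:
  fixes R P a b :: real
  assumes "1 + a > 0" "1 + b > 0"
  shows "2 * (R * P) * a / (1 + a) + 2 * (R * (1 - P)) * b / (1 + b)
       = 2 * R * (1 - (P / (1 + a) + (1 - P) / (1 + b)))"
proof -
  have "a / (1 + a) = 1 - 1 / (1 + a)" "b / (1 + b) = 1 - 1 / (1 + b)"
    using assms by (simp_all add: field_simps)
  hence "2 * (R * P) * a / (1 + a) + 2 * (R * (1 - P)) * b / (1 + b)
       = 2 * (R * P) * (1 - 1 / (1 + a)) + 2 * (R * (1 - P)) * (1 - 1 / (1 + b))"
    by (metis times_divide_eq_right)
  also have "\<dots> = 2 * R * (1 - (P * (1 / (1 + a)) + (1 - P) * (1 / (1 + b))))"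
    by (simp only: algebra_simps)
  finally show ?thesis by simp
qed

text \<open>Time blocks \<open>(sb j, eb j]\<close> inside \<open>[0, H]\<close>, on which jumps in the x- and y-direction
  are exponentially tilted by the parameters \<open>th j\<close> and \<open>ph j\<close>.\<close>
locale tilting =
  fixes J :: "int set" and sb eb th ph :: "int \<Rightarrow> real" and H :: real
  assumes finite_J: "finite J"
    and th_gt: "\<And>j. j \<in> J \<Longrightarrow> th j > -1"
    and ph_gt: "\<And>j. j \<in> J \<Longrightarrow> ph j > -1"
    and blocks_disjoint: "\<And>i j. i \<in> J \<Longrightarrow> j \<in> J \<Longrightarrow> i \<noteq> j \<Longrightarrow> eb i \<le> sb j \<or> eb j \<le> sb i"
begin

definition theta :: "real \<Rightarrow> real" where
  "theta t = (\<Sum>j\<in>J. if sb j < t \<and> t \<le> eb j then th j else 0)"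

definition phi :: "real \<Rightarrow> real" where
  "phi t = (\<Sum>j\<in>J. if sb j < t \<and> t \<le> eb j then ph j else 0)"

definition jump_laplace :: "pt \<Rightarrow> real \<Rightarrow> real" where
  "jump_laplace w v = PP w / (1 + theta v) + (1 - PP w) / (1 + phi v)"

definition block_rate :: "int \<Rightarrow> pt \<Rightarrow> real" where
  "block_rate j w = 2 * RX w * th j / (1 + th j) + 2 * RY w * ph j / (1 + ph j)"

definition compensator :: "pt \<Rightarrow> real \<Rightarrow> real \<Rightarrow> real" where
  "compensator w t s = (\<Sum>j\<in>J. block_rate j w * overlap t s (sb j) (eb j))"

definition tilt_factor :: "pt \<Rightarrow> real \<Rightarrow> real \<times> real \<times> real \<Rightarrow> real" where
  "tilt_factor w t x =
    (let t' = t + fst x / (2 * RR w) in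
     if \<not> nonneg_pt w \<or> H < t then 1
     else if H < t' then exp (compensator w t H)
     else exp (compensator w t t') *
          exp (- theta t' * (fst (jump w x) - fst w) - phi t' * (snd (jump w x) - snd w)))"

definition tilt_prod :: "nat \<Rightarrow> pt \<Rightarrow> real \<Rightarrow> (nat \<Rightarrow> real \<times> real \<times> real) \<Rightarrow> real" where
  "tilt_prod K w t \<omega> = (\<Prod>k<K. tilt_factor (chain w \<omega> k) (t + jtime w \<omega> k) (\<omega> k))"

lemma block_unique:
  assumes "i \<in> J" "j \<in> J" "sb i < s" "s \<le> eb i" "sb j < s" "s \<le> eb j"
  shows "i = j"
  using blocks_disjoint[of i j] assms by force

lemma sum_block:
  assumes "j0 \<in> J" "\<And>j. j \<in> J \<Longrightarrow> j \<noteq> j0 \<Longrightarrow> f j = 0"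
  shows "(\<Sum>j\<in>J. f j) = f j0"
  using sum.remove[OF finite_J assms(1), of f] assms(2) by simp

lemma theta_phi_cases:
  obtains "theta s = 0" "phi s = 0" "\<And>j. j \<in> J \<Longrightarrow> \<not> (sb j < s \<and> s \<le> eb j)"
  | j where "j \<in> J" "sb j < s" "s \<le> eb j" "theta s = th j" "phi s = ph j"
proof (cases "\<exists>j\<in>J. sb j < s \<and> s \<le> eb j")
  case True
  then obtain j where j: "j \<in> J" "sb j < s" "s \<le> eb j" by blast
  have "theta s = th j" "phi s = ph j" unfolding theta_def phi_def
    by (subst sum_block[OF j(1)], use j block_unique in auto)+
  with j that(2) show ?thesis by blast
next
  case False
  hence "theta s = 0" "phi s = 0" unfolding theta_def phi_def by (auto intro!: sum.neutral)
  with False that(1) show ?thesis by blast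
qed

lemma theta_phi_gt: "theta s > -1" "phi s > -1"
  by (cases s rule: theta_phi_cases; use th_gt ph_gt in auto)+

lemma jump_laplace_pos:
  assumes "nonneg_pt w"
  shows "jump_laplace w v > 0"
proof -
  have "1 + theta v > 0" "1 + phi v > 0" using theta_phi_gt[of v] by auto
  with PP_bounds[OF assms] show ?thesis unfolding jump_laplace_def by (simp add: add_pos_pos)
qed

lemma measurable_theta_phi[measurable]:
  "theta \<in> borel_measurable borel" "phi \<in> borel_measurable borel"
  unfolding theta_def phi_def by measurable

lemma measurable_compensator[measurable (raw)]:
  assumes [measurable]: "f \<in> measurable M borel_pt" "g \<in> borel_measurable M" "h \<in> borel_measurable M"
  shows "(\<lambda>x. compensator (f x) (g x) (h x)) \<in> borel_measurable M"
  unfolding compensator_def block_rate_def overlap_def by measurable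

lemma measurable_tilt_factor[measurable (raw)]:
  assumes [measurable]: "f \<in> measurable M borel_pt" "g \<in> borel_measurable M" "h \<in> measurable M borel_step"
  shows "(\<lambda>x. tilt_factor (f x) (g x) (h x)) \<in> borel_measurable M"
  unfolding tilt_factor_def Let_def by measurable

lemma measurable_tilt_prod[measurable]: "(\<lambda>\<omega>. tilt_prod K w t \<omega>) \<in> borel_measurable QQ"
  unfolding tilt_prod_def by measurable

lemma tilt_factor_pos: "tilt_factor w t x > 0"
  unfolding tilt_factor_def Let_def by auto

lemma tilt_prod_Suc:
  "tilt_prod (Suc K) w t \<omega> = tilt_factor w t (\<omega> 0) *
     tilt_prod K (jump w (\<omega> 0)) (t + fst (\<omega> 0) / (2 * RR w)) (\<lambda>i. \<omega> (Suc i))"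
  unfolding tilt_prod_def prod.lessThan_Suc_shift
  by (simp add: chain_Suc_shift jtime_Suc_shift add.assoc del: jtime.simps(2))

lemma compensator_same[simp]: "compensator w t t = 0"
  unfolding compensator_def by simp

lemma compensator_has_derivative:
  assumes "t < v" and sb: "v \<notin> sb ` J" and eb: "v \<notin> eb ` J"
  shows "((\<lambda>s. compensator w t s) has_real_derivative 2 * RR w * (1 - jump_laplace w v)) (at v)"
proof -
  have "((\<lambda>s. compensator w t s) has_real_derivative
          (\<Sum>j\<in>J. block_rate j w * (if sb j < v \<and> v \<le> eb j then 1 else 0))) (at v)"
    unfolding compensator_def
  proof (intro DERIV_sum DERIV_cmult)
    fix j assume j: "j \<in> J"
    have "v \<noteq> max t (sb j)" "v \<noteq> eb j" using assms j by (auto simp: max_def)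
    from overlap_has_derivative[OF this]
    show "((\<lambda>s. overlap t s (sb j) (eb j)) has_real_derivative
            (if sb j < v \<and> v \<le> eb j then 1 else 0)) (at v)"
      using \<open>t < v\<close> \<open>v \<noteq> eb j\<close> by (simp add: order_le_less)
  qed
  also have "(\<Sum>j\<in>J. block_rate j w * (if sb j < v \<and> v \<le> eb j then 1 else 0))
           = 2 * RR w * (1 - jump_laplace w v)"
  proof (cases v rule: theta_phi_cases)
    case 1
    thus ?thesis unfolding jump_laplace_def by (auto intro!: sum.neutral)
  next
    case (2 j)
    have "1 + th j > 0" "1 + ph j > 0" using th_gt ph_gt \<open>j \<in> J\<close> by force+
    hence "block_rate j w = 2 * RR w * (1 - jump_laplace w v)"
      unfolding block_rate_def jump_laplace_def RX_def RY_def 2 by (rule tilted_rate_identity)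
    moreover have "(\<Sum>i\<in>J. block_rate i w * (if sb i < v \<and> v \<le> eb i then 1 else 0)) = block_rate j w"
      by (subst sum_block[OF \<open>j \<in> J\<close>]) (use 2 block_unique in auto)
    ultimately show ?thesis by simp
  qed
  finally show ?thesis .
qed

definition holding_weight :: "pt \<Rightarrow> real \<Rightarrow> real \<Rightarrow> real" where
  "holding_weight w t U =
    (let t' = t + U / (2 * RR w) in
     if H < t' then exp (compensator w t H) else exp (compensator w t t') * jump_laplace w t')"

text \<open>The integrand is the derivative of \<open>u \<mapsto> - exp (compensator w t (t + u / (2 * RR w)) - u)\<close>.\<close>
lemma holding_time_has_integral:
  assumes w: "nonneg_pt w" and tH: "t \<le> H"
  shows "((\<lambda>u. jump_laplace w (t + u / (2 * RR w)) * exp (compensator w t (t + u / (2 * RR w)) - u))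
           has_integral 1 - exp (compensator w t H - 2 * RR w * (H - t))) {0 .. 2 * RR w * (H - t)}"
proof -
  define R where "R = RR w"
  have R: "R \<ge> 1" using RR_ge_1[OF w] by (simp add: R_def)
  define uH where "uH = 2 * R * (H - t)"
  have uH: "uH \<ge> 0" using tH R by (simp add: uH_def)
  define sf where "sf u = t + u / (2 * R)" for u
  define Phi where "Phi u = exp (compensator w t (sf u) - u)" for u
  define S where "S = insert 0 ((\<lambda>v. 2 * R * (v - t)) ` (sb ` J \<union> eb ` J))"
  have der: "((\<lambda>u. - Phi u) has_vector_derivative jump_laplace w (sf u) * Phi u) (at u)"
    if u: "u \<in> {0..uH} - S" for u
  proof -
    have sf_inv: "u = 2 * R * (sf u - t)" unfolding sf_def using R by simp
    have "t < sf u" using u R by (auto simp: S_def sf_def)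
    moreover have "sf u \<notin> sb ` J \<union> eb ` J"
    proof
      assume "sf u \<in> sb ` J \<union> eb ` J"
      hence "u \<in> S" unfolding S_def by (subst sf_inv) blast
      with u show False by simp
    qed
    ultimately have "((\<lambda>s. compensator w t s) has_real_derivative
                       2 * R * (1 - jump_laplace w (sf u))) (at (sf u))"
      unfolding R_def by (intro compensator_has_derivative) auto
    moreover have "(sf has_real_derivative 1 / (2 * R)) (at u)"
      unfolding sf_def using R by (auto intro!: derivative_eq_intros)
    ultimately have "((\<lambda>u. compensator w t (sf u)) has_real_derivative
            2 * R * (1 - jump_laplace w (sf u)) * (1 / (2 * R))) (at u)"
      by (rule DERIV_chain2)
    hence "((\<lambda>u. - Phi u) has_real_derivative - (Phi u * (1 - jump_laplace w (sf u) - 1))) (at u)"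
      unfolding Phi_def using R by (auto intro!: derivative_eq_intros)
    thus ?thesis by (simp add: has_real_derivative_iff_has_vector_derivative algebra_simps)
  qed
  have "finite S" using finite_J by (simp add: S_def)
  moreover have "continuous_on {0..uH} (\<lambda>u. - Phi u)"
    unfolding Phi_def sf_def compensator_def overlap_def using R by (intro continuous_intros) auto
  ultimately have "((\<lambda>u. jump_laplace w (sf u) * Phi u) has_integral - Phi uH - - Phi 0) {0..uH}"
    using uH der by (intro fundamental_theorem_of_calculus_strong) auto
  moreover have "sf uH = H" "sf 0 = t" using R by (simp_all add: sf_def uH_def)
  ultimately show ?thesis by (simp add: Phi_def sf_def uH_def R_def)
qed

lemma nn_integral_holding_time:
  assumes w: "nonneg_pt w" and tH: "t \<le> H"
  shows "(\<integral>\<^sup>+U. ennreal (exponential_density 1 U * holding_weight w t U) \<partial>lborel) = 1"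
    (is "(\<integral>\<^sup>+U. ennreal (?h U) \<partial>lborel) = 1")
proof -
  define R where "R = RR w"
  have R: "R \<ge> 1" using RR_ge_1[OF w] by (simp add: R_def)
  define uH where "uH = 2 * R * (H - t)"
  have uH: "uH \<ge> 0" using tH R by (simp add: uH_def)
  define q where "q = exp (compensator w t H - uH)"
  define f1 where "f1 u = (if u \<in> {0..uH} then jump_laplace w (t + u / (2 * R)) *
                             exp (compensator w t (t + u / (2 * R)) - u) else 0)" for u
  define f2 where "f2 u = (if u \<in> {uH..} then exp (compensator w t H) * exp (- 1 * u) else 0)" for u
  have f_nonneg: "f1 u \<ge> 0" "f2 u \<ge> 0" for u
    using jump_laplace_pos[OF w] by (simp_all add: f1_def f2_def less_imp_le)
  have [measurable]: "(\<lambda>x::real. w) \<in> measurable borel borel_pt" by (simp add: space_pair_measure)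
  have f_meas: "f1 \<in> borel_measurable borel" "f2 \<in> borel_measurable borel"
    unfolding f1_def f2_def jump_laplace_def by measurable
  have I1: "(f1 has_integral (1 - q)) UNIV"
    using holding_time_has_integral[OF w tH]
    unfolding f1_def has_integral_restrict_UNIV q_def uH_def R_def .
  have "((\<lambda>u. exp (compensator w t H) * exp (- 1 * u)) has_integral
          exp (compensator w t H) * (exp (- 1 * uH) / 1)) {uH..}"
    by (intro has_integral_mult_right has_integral_exp_minus_to_infinity) simp
  hence I2: "(f2 has_integral q) UNIV"
    unfolding f2_def has_integral_restrict_UNIV q_def by (simp add: exp_diff exp_minus field_simps)
  have "1 - q \<ge> 0" by (rule has_integral_nonneg[OF I1]) (rule f_nonneg)
  have split: "?h u = f1 u + f2 u" if "u \<noteq> uH" for u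
  proof -
    have "H < t + u / (2 * R) \<longleftrightarrow> uH < u" using R by (simp add: uH_def field_simps)
    thus ?thesis using that uH
      by (auto simp: f1_def f2_def holding_weight_def exponential_density_def R_def Let_def
                     exp_diff exp_minus field_simps)
  qed
  have "(\<integral>\<^sup>+U. ennreal (?h U) \<partial>lborel) = (\<integral>\<^sup>+U. ennreal (f1 U) + ennreal (f2 U) \<partial>lborel)"
    using AE_lborel_singleton[of uH]
    by (intro nn_integral_cong_AE) (auto elim!: eventually_mono simp: split f_nonneg)
  also have "\<dots> = (\<integral>\<^sup>+U. ennreal (f1 U) \<partial>lborel) + (\<integral>\<^sup>+U. ennreal (f2 U) \<partial>lborel)"
    by (rule nn_integral_add) (use f_meas in auto)
  also have "\<dots> = ennreal (1 - q) + ennreal q"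
    using nn_integral_has_integral_lborel[OF f_meas(1) f_nonneg(1) I1]
      nn_integral_has_integral_lborel[OF f_meas(2) f_nonneg(2) I2] by simp
  also have "\<dots> = 1"
    using \<open>1 - q \<ge> 0\<close> by (simp add: q_def ennreal_plus[symmetric] del: ennreal_plus)
  finally show ?thesis .
qed

lemma nn_integral_tilt_factor_given_holding:
  assumes w: "nonneg_pt w" and tH: "t \<le> H"
  shows "(\<integral>\<^sup>+y. ennreal (tilt_factor w t (U, y)) \<partial>(Unif01 \<Otimes>\<^sub>M Exp1)) = ennreal (holding_weight w t U)"
proof -
  interpret UE: prob_space "Unif01 \<Otimes>\<^sub>M Exp1"
    by (intro prob_space_pair prob_space_exponential_density prob_space_uniform_measure) auto
  define t' where "t' = t + U / (2 * RR w)"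
  show ?thesis
  proof (cases "H < t'")
    case True
    thus ?thesis using w tH
      by (simp add: tilt_factor_def holding_weight_def t'_def UE.emeasure_space_1)
  next
    case False
    have "(\<integral>\<^sup>+y. ennreal (tilt_factor w t (U, y)) \<partial>(Unif01 \<Otimes>\<^sub>M Exp1))
        = (\<integral>\<^sup>+y. ennreal (exp (compensator w t t')) *
             ennreal (if fst y < PP w then exp (- theta t' * snd y) else exp (- phi t' * snd y))
           \<partial>(Unif01 \<Otimes>\<^sub>M Exp1))"
      by (rule nn_integral_cong)
         (use False w tH in \<open>auto simp: tilt_factor_def t'_def jump_def Let_def ennreal_mult'[symmetric]\<close>)
    also have "\<dots> = ennreal (exp (compensator w t t')) * ennreal (jump_laplace w t')"
      using PP_bounds[OF w] theta_phi_gt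
      by (simp add: nn_integral_cmult nn_integral_jump_laplace jump_laplace_def)
    also have "\<dots> = ennreal (holding_weight w t U)"
      using False by (simp add: holding_weight_def t'_def[symmetric] ennreal_mult'[symmetric])
    finally show ?thesis .
  qed
qed

lemma nn_integral_tilt_factor: "(\<integral>\<^sup>+x. ennreal (tilt_factor w t x) \<partial>Dstep) = 1"
proof (cases "nonneg_pt w \<and> t \<le> H")
  case False
  interpret prob_space Dstep by (rule prob_space_Dstep)
  have "(\<integral>\<^sup>+x. ennreal (tilt_factor w t x) \<partial>Dstep) = (\<integral>\<^sup>+x. 1 \<partial>Dstep)"
    by (rule nn_integral_cong) (use False in \<open>auto simp: tilt_factor_def\<close>)
  thus ?thesis by (simp add: emeasure_space_1)
next
  case True
  hence w: "nonneg_pt w" and tH: "t \<le> H" by auto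
  interpret UE: prob_space "Unif01 \<Otimes>\<^sub>M Exp1"
    by (intro prob_space_pair prob_space_exponential_density prob_space_uniform_measure) auto
  have [measurable]: "(\<lambda>x::real. w) \<in> measurable borel borel_pt"
    "(\<lambda>x::real \<times> real \<times> real. w) \<in> measurable borel_step borel_pt"
    by (simp_all add: space_pair_measure)
  have "(\<lambda>x. ennreal (tilt_factor w t x)) \<in> borel_measurable (Exp1 \<Otimes>\<^sub>M (Unif01 \<Otimes>\<^sub>M Exp1))"
    unfolding measurable_cong_sets[OF sets_Dstep[unfolded Dstep_def] refl] by measurable
  hence "(\<integral>\<^sup>+x. ennreal (tilt_factor w t x) \<partial>Dstep)
       = (\<integral>\<^sup>+U. \<integral>\<^sup>+y. ennreal (tilt_factor w t (U, y)) \<partial>(Unif01 \<Otimes>\<^sub>M Exp1) \<partial>Exp1)"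
    unfolding Dstep_def by (rule UE.nn_integral_fst[symmetric])
  also have "\<dots> = (\<integral>\<^sup>+U. ennreal (holding_weight w t U) \<partial>Exp1)"
    by (simp add: nn_integral_tilt_factor_given_holding[OF w tH])
  also have "\<dots> = (\<integral>\<^sup>+U. ennreal (exponential_density 1 U * holding_weight w t U) \<partial>lborel)"
  proof -
    have "(\<lambda>U. ennreal (holding_weight w t U)) \<in> borel_measurable lborel"
      unfolding holding_weight_def jump_laplace_def Let_def measurable_lborel2 by measurable
    thus ?thesis
      by (subst nn_integral_density) (auto simp: ennreal_mult'[symmetric] exponential_density_nonneg)
  qed
  also have "\<dots> = 1" by (rule nn_integral_holding_time[OF w tH])
  finally show ?thesis .
qed

lemma nn_integral_tilt_prod: "(\<integral>\<^sup>+\<omega>. ennreal (tilt_prod K w t \<omega>) \<partial>QQ) = 1"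
proof (induction K arbitrary: w t)
  case 0
  interpret prob_space QQ by (rule prob_space_QQ)
  show ?case by (simp add: tilt_prod_def emeasure_space_1)
next
  case (Suc K)
  have "(\<integral>\<^sup>+\<omega>. ennreal (tilt_prod (Suc K) w t \<omega>) \<partial>QQ)
      = (\<integral>\<^sup>+x. (\<integral>\<^sup>+\<omega>. ennreal (tilt_prod (Suc K) w t (case_nat x \<omega>)) \<partial>QQ) \<partial>Dstep)"
    by (rule nn_integral_QQ_case_nat) measurable
  also have "\<dots> = (\<integral>\<^sup>+x. ennreal (tilt_factor w t x) *
       (\<integral>\<^sup>+\<omega>. ennreal (tilt_prod K (jump w x) (t + fst x / (2 * RR w)) \<omega>) \<partial>QQ) \<partial>Dstep)"
    by (intro nn_integral_cong)
       (simp add: tilt_prod_Suc ennreal_mult' tilt_factor_pos[THEN less_imp_le] nn_integral_cmult)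
  also have "\<dots> = 1" by (simp add: Suc.IH nn_integral_tilt_factor)
  finally show ?case .
qed

end

section \<open>The tilted product along a sample path\<close>

locale tilted_path = tilting +
  fixes w0 :: pt and \<omega> :: "nat \<Rightarrow> real \<times> real \<times> real" and Y :: "real \<Rightarrow> pt"
    and lb :: "int \<Rightarrow> real"
  assumes holding_pos: "\<And>i. fst (\<omega> i) > 0" and jump_pos: "\<And>i. snd (snd (\<omega> i)) > 0"
    and H_nonneg: "0 \<le> H"
    and xi_eq_path: "\<And>r. 0 \<le> r \<Longrightarrow> r \<le> H \<Longrightarrow> xi w0 \<omega> r = Y r"
    and path_mono: "\<And>r r'. 0 \<le> r \<Longrightarrow> r \<le> r' \<Longrightarrow> r' \<le> H \<Longrightarrow>
                      fst (Y r) \<le> fst (Y r') \<and> snd (Y r) \<le> snd (Y r')"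
    and path_nonneg: "\<And>r. 0 \<le> r \<Longrightarrow> r \<le> H \<Longrightarrow> nonneg_pt (Y r)"
    and blocks_in_horizon: "\<And>j. j \<in> J \<Longrightarrow> 0 \<le> sb j \<and> sb j \<le> eb j \<and> eb j \<le> H"
    and block_rate_ge: "\<And>j r. j \<in> J \<Longrightarrow> sb j < r \<Longrightarrow> r < eb j \<Longrightarrow> lb j \<le> block_rate j (Y r)"
begin

abbreviation "Z k \<equiv> chain w0 \<omega> k"
abbreviation "tau k \<equiv> jtime w0 \<omega> k"
abbreviation "tau_H k \<equiv> min (tau (Suc k)) H"

lemma tau_Suc: "tau (Suc k) = tau k + fst (\<omega> k) / (2 * RR (Z k))"
  by (rule jtime.simps(2))

declare jtime.simps(2)[simp del]

lemma njumps_0: "njumps w0 \<omega> 0 = 0"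
  unfolding njumps_def
proof (rule Least_equality)
  show "\<not> (0 < RR (Z 0) \<and> tau (Suc 0) \<le> 0)"
  proof
    assume h: "0 < RR (Z 0) \<and> tau (Suc 0) \<le> 0"
    hence "fst (\<omega> 0) / (2 * RR w0) > 0" using holding_pos[of 0] by (intro divide_pos_pos) auto
    thus False using h by (simp add: tau_Suc)
  qed
qed simp

lemma start_eq: "w0 = Y 0"
  using xi_eq_path[of 0] H_nonneg njumps_0 unfolding xi_def by simp

lemma chain_nonneg: "nonneg_pt (Z k)"
proof (induction k)
  case 0 thus ?case using start_eq path_nonneg[of 0] H_nonneg by simp
next
  case (Suc k)
  thus ?case using jump_pos[of k] unfolding chain_Suc_jump jump_def nonneg_pt_def by auto
qed

lemma RR_chain_ge_1: "RR (Z k) \<ge> 1"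
  using RR_ge_1[OF chain_nonneg] .

lemma tau_less: "tau k < tau (Suc k)"
  using holding_pos[of k] RR_chain_ge_1[of k] by (simp add: divide_pos_pos tau_Suc)

lemma tau_strict_mono: "strict_mono tau"
  unfolding strict_mono_Suc_iff using tau_less by blast

lemma tau_le_iff: "tau i \<le> tau k \<longleftrightarrow> i \<le> k"
  using tau_strict_mono by (simp add: strict_mono_less_eq)

lemma tau_less_iff: "tau i < tau k \<longleftrightarrow> i < k"
  using tau_strict_mono by (simp add: strict_mono_less)

lemma tau_nonneg: "0 \<le> tau k"
  using tau_le_iff[of 0 k] by simp

lemma njumps_eq:
  assumes "tau m \<le> r" "r < tau (Suc m)"
  shows "njumps w0 \<omega> r = m"
  unfolding njumps_def
proof (rule Least_equality)
  show "\<not> (0 < RR (Z m) \<and> tau (Suc m) \<le> r)" using assms by simp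
next
  fix y assume y: "\<not> (0 < RR (Z y) \<and> tau (Suc y) \<le> r)"
  show "m \<le> y"
  proof (rule ccontr)
    assume "\<not> m \<le> y"
    hence "tau (Suc y) \<le> tau m" using tau_le_iff by simp
    thus False using y assms RR_chain_ge_1[of y] by simp
  qed
qed

lemma xi_eq_chain: "tau m \<le> r \<Longrightarrow> r < tau (Suc m) \<Longrightarrow> xi w0 \<omega> r = Z m"
  unfolding xi_def using njumps_eq by simp

text \<open>No explosion before \<open>H\<close>: jump times accumulating at some \<open>\<sigma> \<le> H\<close> would force
  \<open>Y \<sigma> = Z n\<^sub>0\<close> although \<open>Y\<close> already passed through the strictly larger state \<open>Z (Suc n\<^sub>0)\<close>
  before \<open>\<sigma>\<close>, contradicting the monotonicity of \<open>Y\<close>.\<close>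
lemma ex_last_jump: "\<exists>N. tau N \<le> H \<and> H < tau (Suc N)"
proof (rule ccontr)
  assume a: "\<not> ?thesis"
  have all: "tau k \<le> H" for k
  proof (induction k)
    case 0 thus ?case using H_nonneg by simp
  next
    case (Suc k) thus ?case using a by force
  qed
  define \<sigma> where "\<sigma> = (SUP k. tau k)"
  have bdd: "bdd_above (range tau)" by (rule bdd_aboveI[of _ H]) (use all in auto)
  have le: "tau k \<le> \<sigma>" for k unfolding \<sigma>_def by (rule cSUP_upper[OF _ bdd]) simp
  have lt: "tau k < \<sigma>" for k using tau_less[of k] le[of "Suc k"] by simp
  have \<sigma>H: "\<sigma> \<le> H" unfolding \<sigma>_def by (rule cSUP_least) (use all in auto)
  have \<sigma>0: "0 \<le> \<sigma>" using le[of 0] by simp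
  define n0 where "n0 = njumps w0 \<omega> \<sigma>"
  have Y\<sigma>: "Y \<sigma> = Z n0" using xi_eq_path[OF \<sigma>0 \<sigma>H] unfolding xi_def n0_def by simp
  define r where "r = tau (Suc n0)"
  have r0: "0 \<le> r" unfolding r_def by (rule tau_nonneg)
  have "xi w0 \<omega> r = Z (Suc n0)" unfolding r_def by (rule xi_eq_chain) (use tau_less in auto)
  hence Yr: "Y r = Z (Suc n0)" using xi_eq_path[OF r0] lt[of "Suc n0"] \<sigma>H unfolding r_def by simp
  have "fst (Y r) \<le> fst (Y \<sigma>) \<and> snd (Y r) \<le> snd (Y \<sigma>)"
    using path_mono[OF r0 _ \<sigma>H] lt[of "Suc n0"] unfolding r_def by simp
  thus False using Yr Y\<sigma> jump_pos[of n0] unfolding chain_Suc_jump jump_def by (auto split: if_splits)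
qed

abbreviation "N \<equiv> njumps w0 \<omega> H"

lemma N_bounds: "tau N \<le> H" "H < tau (Suc N)"
  using ex_last_jump njumps_eq by auto

lemma ex_jump_interval:
  assumes "0 \<le> r" "r \<le> H"
  shows "\<exists>m\<le>N. tau m \<le> r \<and> r < tau (Suc m)"
proof -
  have ex: "\<exists>k. r < tau k" using N_bounds(2) assms by (intro exI[of _ "Suc N"]) simp
  define k0 where "k0 = (LEAST k. r < tau k)"
  have k0: "r < tau k0" unfolding k0_def by (rule LeastI_ex[OF ex])
  have "k0 \<noteq> 0" using k0 assms by (cases k0) auto
  then obtain m where m: "k0 = Suc m" using not0_implies_Suc by blast
  have "\<not> r < tau m" unfolding k0_def by (rule not_less_Least) (use m in \<open>simp add: k0_def\<close>)
  hence "tau m \<le> r" by simp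
  moreover from this have "m \<le> N" using assms N_bounds tau_le_iff[of "Suc N" m] by linarith
  ultimately show ?thesis using k0 m by blast
qed

lemma path_eq_chain: "tau m \<le> r \<Longrightarrow> r < tau (Suc m) \<Longrightarrow> r \<le> H \<Longrightarrow> Y r = Z m"
  using xi_eq_path[of r] xi_eq_chain[of m r] tau_nonneg[of m] by simp

lemma tilt_factor_after_horizon: "N < k \<Longrightarrow> tilt_factor (Z k) (tau k) (\<omega> k) = 1"
  using N_bounds tau_le_iff[of "Suc N" k] unfolding tilt_factor_def by simp

lemma tilt_prod_stable: "Suc N \<le> K \<Longrightarrow> tilt_prod K w0 0 \<omega> = tilt_prod (Suc N) w0 0 \<omega>"
proof (induction K rule: dec_induct)
  case (step K)
  thus ?case unfolding tilt_prod_def using tilt_factor_after_horizon[of K] by simp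
qed simp

definition log_factor :: "nat \<Rightarrow> real" where
  "log_factor k = compensator (Z k) (tau k) (tau_H k) -
     (if k < N then theta (tau (Suc k)) * (fst (Z (Suc k)) - fst (Z k))
                    + phi (tau (Suc k)) * (snd (Z (Suc k)) - snd (Z k))
      else 0)"

lemma tilt_factor_eq_exp:
  assumes "k \<le> N"
  shows "tilt_factor (Z k) (tau k) (\<omega> k) = exp (log_factor k)"
proof -
  have tk: "tau k \<le> H" using assms tau_le_iff[of k N] N_bounds by simp
  show ?thesis
  proof (cases "k < N")
    case True
    hence "tau (Suc k) \<le> H" using tau_le_iff[of "Suc k" N] N_bounds by simp
    thus ?thesis using True tk chain_nonneg[of k] unfolding tilt_factor_def log_factor_def
      by (simp add: Let_def tau_Suc[symmetric] chain_Suc_jump[symmetric] exp_add[symmetric])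
  next
    case False
    hence "k = N" using assms by simp
    thus ?thesis using tk chain_nonneg[of k] N_bounds unfolding tilt_factor_def log_factor_def
      by (simp add: tau_Suc[symmetric])
  qed
qed

lemma tilt_prod_eq_exp: "tilt_prod (Suc N) w0 0 \<omega> = exp (\<Sum>k<Suc N. log_factor k)"
  unfolding tilt_prod_def exp_sum[OF finite_lessThan]
  by (rule prod.cong) (auto simp: tilt_factor_eq_exp)

lemma overlap_telescope: "(\<Sum>k<m. overlap (tau k) (tau (Suc k)) p q) = overlap 0 (tau m) p q"
proof (induction m)
  case (Suc m)
  have "overlap 0 (tau m) p q + overlap (tau m) (tau (Suc m)) p q = overlap 0 (tau (Suc m)) p q"
    by (rule overlap_add) (use tau_nonneg[of m] tau_less[of m] in auto)
  with Suc show ?case by simp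
qed simp

lemma overlap_total: "(\<Sum>k<Suc N. overlap (tau k) (tau_H k) p q) = overlap 0 H p q"
proof -
  have "tau_H k = tau (Suc k)" if "k < N" for k
    using that tau_le_iff[of "Suc k" N] N_bounds by simp
  hence "(\<Sum>k<Suc N. overlap (tau k) (tau_H k) p q)
       = (\<Sum>k<N. overlap (tau k) (tau (Suc k)) p q) + overlap (tau N) H p q"
    using N_bounds by simp
  also have "\<dots> = overlap 0 H p q"
    unfolding overlap_telescope by (rule overlap_add) (use tau_nonneg[of N] N_bounds in auto)
  finally show ?thesis .
qed

lemma block_rate_chain_ge:
  assumes j: "j \<in> J" and pos: "0 < overlap (tau k) (tau_H k) (sb j) (eb j)"
  shows "lb j \<le> block_rate j (Z k)"
proof -
  define r where "r = (max (tau k) (sb j) + min (tau_H k) (eb j)) / 2"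
  have "max (tau k) (sb j) < min (tau_H k) (eb j)"
    using pos unfolding overlap_def by linarith
  hence "tau k \<le> r" "r < tau (Suc k)" "r \<le> H" "sb j < r" "r < eb j"
    unfolding r_def by auto
  hence "Y r = Z k" using path_eq_chain by blast
  thus ?thesis using block_rate_ge[OF j \<open>sb j < r\<close> \<open>r < eb j\<close>] by simp
qed

lemma compensator_sum_ge:
  "(\<Sum>j\<in>J. lb j * (eb j - sb j)) \<le> (\<Sum>k<Suc N. compensator (Z k) (tau k) (tau_H k))"
proof -
  have "(\<Sum>j\<in>J. lb j * (eb j - sb j)) = (\<Sum>j\<in>J. \<Sum>k<Suc N. lb j * overlap (tau k) (tau_H k) (sb j) (eb j))"
  proof (rule sum.cong)
    fix j assume "j \<in> J"
    hence "overlap 0 H (sb j) (eb j) = eb j - sb j"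
      using blocks_in_horizon unfolding overlap_def by simp
    thus "lb j * (eb j - sb j) = (\<Sum>k<Suc N. lb j * overlap (tau k) (tau_H k) (sb j) (eb j))"
      by (simp only: sum_distrib_left[symmetric] overlap_total)
  qed simp
  also have "\<dots> \<le> (\<Sum>j\<in>J. \<Sum>k<Suc N. block_rate j (Z k) * overlap (tau k) (tau_H k) (sb j) (eb j))"
  proof (intro sum_mono)
    fix j k assume "j \<in> J"
    show "lb j * overlap (tau k) (tau_H k) (sb j) (eb j)
          \<le> block_rate j (Z k) * overlap (tau k) (tau_H k) (sb j) (eb j)"
      using block_rate_chain_ge[OF \<open>j \<in> J\<close>, of k] overlap_nonneg[of "tau k" "tau_H k" "sb j" "eb j"]
      by (cases "overlap (tau k) (tau_H k) (sb j) (eb j) = 0") (auto intro: mult_right_mono)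
  qed
  also have "\<dots> = (\<Sum>k<Suc N. compensator (Z k) (tau k) (tau_H k))"
    unfolding compensator_def by (rule sum.swap)
  finally show ?thesis .
qed

lemma increment_count:
  fixes pr :: "pt \<Rightarrow> real"
  assumes "0 \<le> r" "r \<le> H"
  shows "(\<Sum>k<N. if tau (Suc k) \<le> r then pr (Z (Suc k)) - pr (Z k) else 0) = pr (Y r) - pr (Z 0)"
proof -
  obtain m where m: "m \<le> N" "tau m \<le> r" "r < tau (Suc m)"
    using ex_jump_interval[OF assms] by blast
  have "tau (Suc k) \<le> r \<longleftrightarrow> k \<in> {..<m}" for k
    using m tau_le_iff[of "Suc k" m] tau_less_iff[of "Suc k" "Suc m"] by auto
  hence "(\<Sum>k<N. if tau (Suc k) \<le> r then pr (Z (Suc k)) - pr (Z k) else 0)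
      = (\<Sum>k\<in>{..<N} \<inter> {..<m}. pr (Z (Suc k)) - pr (Z k))"
    by (simp add: sum.inter_restrict)
  also have "{..<N} \<inter> {..<m} = {..<m}" using m by auto
  also have "(\<Sum>k<m. pr (Z (Suc k)) - pr (Z k)) = pr (Z m) - pr (Z 0)"
    by (rule sum_lessThan_telescope)
  also have "Z m = Y r" using path_eq_chain[OF m(2,3) assms(2)] by simp
  finally show ?thesis .
qed

lemma tilt_sum_eq_block_increments:
  fixes pr :: "pt \<Rightarrow> real" and c :: "int \<Rightarrow> real"
  shows "(\<Sum>k<N. (\<Sum>j\<in>J. if sb j < tau (Suc k) \<and> tau (Suc k) \<le> eb j then c j else 0)
                   * (pr (Z (Suc k)) - pr (Z k)))
       = (\<Sum>j\<in>J. c j * (pr (Y (eb j)) - pr (Y (sb j))))"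
proof -
  have "(\<Sum>k<N. if sb j < tau (Suc k) \<and> tau (Suc k) \<le> eb j then pr (Z (Suc k)) - pr (Z k) else 0)
      = pr (Y (eb j)) - pr (Y (sb j))" if j: "j \<in> J" for j
  proof -
    have "(\<Sum>k<N. if sb j < tau (Suc k) \<and> tau (Suc k) \<le> eb j then pr (Z (Suc k)) - pr (Z k) else 0)
        = (\<Sum>k<N. if tau (Suc k) \<le> eb j then pr (Z (Suc k)) - pr (Z k) else 0)
          - (\<Sum>k<N. if tau (Suc k) \<le> sb j then pr (Z (Suc k)) - pr (Z k) else 0)"
      unfolding sum_subtractf[symmetric] by (rule sum.cong) (use blocks_in_horizon[OF j] in auto)
    thus ?thesis using blocks_in_horizon[OF j] by (simp add: increment_count)
  qed
  hence "(\<Sum>j\<in>J. c j * (pr (Y (eb j)) - pr (Y (sb j))))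
      = (\<Sum>j\<in>J. \<Sum>k<N. c j * (if sb j < tau (Suc k) \<and> tau (Suc k) \<le> eb j
                                 then pr (Z (Suc k)) - pr (Z k) else 0))"
    by (intro sum.cong refl) (simp add: sum_distrib_left[symmetric])
  also have "\<dots> = (\<Sum>k<N. (\<Sum>j\<in>J. if sb j < tau (Suc k) \<and> tau (Suc k) \<le> eb j then c j else 0)
                          * (pr (Z (Suc k)) - pr (Z k)))"
    by (subst sum.swap, unfold sum_distrib_right) (intro sum.cong refl, simp)
  finally show ?thesis ..
qed

definition block_exponent :: "int \<Rightarrow> real" where
  "block_exponent j = lb j * (eb j - sb j) - th j * (fst (Y (eb j)) - fst (Y (sb j)))
                                           - ph j * (snd (Y (eb j)) - snd (Y (sb j)))"

lemma log_factor_sum_ge: "(\<Sum>j\<in>J. block_exponent j) \<le> (\<Sum>k<Suc N. log_factor k)"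
proof -
  define A where "A k = theta (tau (Suc k)) * (fst (Z (Suc k)) - fst (Z k))" for k
  define B where "B k = phi (tau (Suc k)) * (snd (Z (Suc k)) - snd (Z k))" for k
  have "(\<Sum>k<Suc N. log_factor k)
      = (\<Sum>k<Suc N. compensator (Z k) (tau k) (tau_H k)) - (\<Sum>k<N. A k + B k)"
    unfolding log_factor_def A_def B_def sum_subtractf by (simp add: sum.If_cases)
  also have "(\<Sum>k<N. A k + B k) = (\<Sum>j\<in>J. th j * (fst (Y (eb j)) - fst (Y (sb j))))
                                 + (\<Sum>j\<in>J. ph j * (snd (Y (eb j)) - snd (Y (sb j))))"
    unfolding sum.distrib A_def B_def theta_def phi_def
    by (simp only: tilt_sum_eq_block_increments)
  finally show ?thesis
    using compensator_sum_ge unfolding block_exponent_def sum_subtractf by linarith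
qed

theorem tilt_prod_lower_bound:
  "\<forall>\<^sub>F K in sequentially. exp (\<Sum>j\<in>J. block_exponent j) \<le> tilt_prod K w0 0 \<omega>"
proof (rule eventually_sequentiallyI)
  fix K assume "Suc N \<le> K"
  hence "tilt_prod K w0 0 \<omega> = exp (\<Sum>k<Suc N. log_factor k)"
    by (simp add: tilt_prod_stable tilt_prod_eq_exp)
  thus "exp (\<Sum>j\<in>J. block_exponent j) \<le> tilt_prod K w0 0 \<omega>"
    using log_factor_sum_ge by simp
qed

end

lemma (in tilting) tilted_path_scaled:
  assumes T: "T > 0" and ab: "0 \<le> a" "a \<le> b" "b \<le> 1" and H: "H = (b - a) * T"
    and g_mono: "mono_on {0..1} (fst g)" "mono_on {0..1} (snd g)"
    and g_nonneg: "\<And>s. s \<in> {0..1} \<Longrightarrow> nonneg_pt (T *\<^sub>R at2 g s)"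
    and steps: "\<forall>i. 0 < fst (\<omega> i) \<and> 0 < snd (snd (\<omega> i))"
    and path: "\<forall>s\<in>{a..b}. (1 / T) *\<^sub>R xi (T *\<^sub>R z) \<omega> ((s - a) * T) = at2 g s"
    and blocks: "\<And>j. j \<in> J \<Longrightarrow> 0 \<le> sb j \<and> sb j \<le> eb j \<and> eb j \<le> H"
    and rate: "\<And>j r. j \<in> J \<Longrightarrow> sb j < r \<Longrightarrow> r < eb j \<Longrightarrow>
                 lb j \<le> block_rate j (T *\<^sub>R at2 g (a + r / T))"
  shows "tilted_path J sb eb th ph H (T *\<^sub>R z) \<omega> (\<lambda>r. T *\<^sub>R at2 g (a + r / T)) lb"
proof -
  have time: "a + r / T \<in> {a..b}" if "0 \<le> r" "r \<le> H" for r
    using that T by (auto simp: H field_simps)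
  show ?thesis
  proof (intro tilted_path.intro tilting_axioms tilted_path_axioms.intro)
    fix r assume r: "0 \<le> r" "r \<le> H"
    have "T \<noteq> 0" using T by simp
    with bspec[OF path time[OF r]]
    have "(1 / T) *\<^sub>R xi (T *\<^sub>R z) \<omega> r = at2 g (a + r / T)" by simp
    moreover have "xi (T *\<^sub>R z) \<omega> r = T *\<^sub>R ((1 / T) *\<^sub>R xi (T *\<^sub>R z) \<omega> r)"
      using \<open>T \<noteq> 0\<close> by simp
    ultimately show "xi (T *\<^sub>R z) \<omega> r = T *\<^sub>R at2 g (a + r / T)" by simp
    show "nonneg_pt (T *\<^sub>R at2 g (a + r / T))" using g_nonneg time[OF r] ab by auto
  next
    fix r r' assume r: "0 \<le> r" "r \<le> r'" "r' \<le> H"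
    have "a + r / T \<le> a + r' / T" using r T by (simp add: divide_right_mono)
    moreover have "a + r / T \<in> {0..1}" "a + r' / T \<in> {0..1}" using time[of r] time[of r'] r ab by auto
    ultimately have "fst g (a + r / T) \<le> fst g (a + r' / T)" "snd g (a + r / T) \<le> snd g (a + r' / T)"
      using g_mono by (auto elim!: mono_onD)
    thus "fst (T *\<^sub>R at2 g (a + r / T)) \<le> fst (T *\<^sub>R at2 g (a + r' / T)) \<and>
          snd (T *\<^sub>R at2 g (a + r / T)) \<le> snd (T *\<^sub>R at2 g (a + r' / T))"
      using T by (simp add: at2_def)
  qed (use steps blocks rate ab T in \<open>auto simp: H\<close>)
qed

lemma measure_le_inverse_of_nn_integral_le_1:
  assumes f[measurable]: "f \<in> borel_measurable M" and int: "(\<integral>\<^sup>+x. f x \<partial>M) \<le> 1"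
    and c: "c > 0" and ge: "AE x in M. x \<in> A \<longrightarrow> ennreal c \<le> f x"
  shows "measure M A \<le> 1 / c"
proof -
  define B where "B = {x \<in> space M. 1 \<le> ennreal (1 / c) * f x}"
  have "AE x in M. x \<in> A \<longrightarrow> x \<in> B"
    using ge AE_space
  proof eventually_elim
    case (elim x)
    show ?case
    proof
      assume "x \<in> A"
      hence "ennreal (1 / c) * ennreal c \<le> ennreal (1 / c) * f x"
        using elim by (intro mult_left_mono) auto
      thus "x \<in> B" using c elim by (simp add: B_def ennreal_mult'[symmetric])
    qed
  qed
  hence "emeasure M A \<le> emeasure M B" by (rule emeasure_mono_AE) (simp add: B_def)
  also have "\<dots> \<le> ennreal (1 / c) * (\<integral>\<^sup>+x. f x * indicator (space M) x \<partial>M)"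
    unfolding B_def by (rule nn_integral_Markov_inequality) auto
  also have "(\<integral>\<^sup>+x. f x * indicator (space M) x \<partial>M) = (\<integral>\<^sup>+x. f x \<partial>M)"
    by (rule nn_integral_cong) simp
  also have "ennreal (1 / c) * (\<integral>\<^sup>+x. f x \<partial>M) \<le> ennreal (1 / c)"
    using mult_left_mono[OF int, of "ennreal (1 / c)"] by simp
  finally show ?thesis unfolding measure_def by (rule enn2real_leI[rotated]) (use c in simp)
qed

text \<open>Fatou's lemma bounds the mean of the liminf of the tilted products by one.\<close>
lemma (in tilting) measure_le_inverse_tilt_prod:
  assumes c0: "c0 > 0"
    and ev: "\<And>\<omega>. \<omega> \<in> Ev \<Longrightarrow> \<forall>i. 0 < fst (\<omega> i) \<and> 0 < snd (snd (\<omega> i)) \<Longrightarrow>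
               \<forall>\<^sub>F K in sequentially. c0 \<le> tilt_prod K w t \<omega>"
  shows "measure QQ Ev \<le> 1 / c0"
proof (rule measure_le_inverse_of_nn_integral_le_1[OF _ _ c0])
  define Psi where "Psi \<omega> = liminf (\<lambda>K. ennreal (tilt_prod K w t \<omega>))" for \<omega>
  show "Psi \<in> borel_measurable QQ" unfolding Psi_def by measurable
  have "(\<integral>\<^sup>+\<omega>. Psi \<omega> \<partial>QQ) \<le> liminf (\<lambda>K. \<integral>\<^sup>+\<omega>. ennreal (tilt_prod K w t \<omega>) \<partial>QQ)"
    unfolding Psi_def by (rule nn_integral_liminf) measurable
  thus "(\<integral>\<^sup>+\<omega>. Psi \<omega> \<partial>QQ) \<le> 1" by (simp add: nn_integral_tilt_prod Liminf_const)
  show "AE \<omega> in QQ. \<omega> \<in> Ev \<longrightarrow> ennreal c0 \<le> Psi \<omega>"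
    using AE_QQ_steps_pos
    by eventually_elim
       (auto simp: Psi_def dest!: ev intro!: Liminf_bounded elim!: eventually_mono intro: ennreal_leI)
qed

section \<open>Optimising the tilt\<close>

text \<open>\<open>tilt_gain L Rm Rp D1 D2 \<theta>\<close> is the least value of \<open>L * 2 R \<theta> / (1 + \<theta>) - \<theta> \<Delta>\<close> over rates
  \<open>R \<in> [Rm, Rp]\<close> and displacements \<open>\<Delta> \<in> [D2, D1]\<close>; its supremum over \<open>\<theta> > -1\<close> is
  \<open>rate_bound L Rm Rp D1 D2\<close>, which is the shape of the functionals EXp and EYp.\<close>
definition tilt_rate :: "real \<Rightarrow> real \<Rightarrow> real \<Rightarrow> real" where
  "tilt_rate Rm Rp \<theta> = 2 * (if 0 \<le> \<theta> then Rm else Rp) * \<theta> / (1 + \<theta>)"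

definition tilt_gain :: "real \<Rightarrow> real \<Rightarrow> real \<Rightarrow> real \<Rightarrow> real \<Rightarrow> real \<Rightarrow> real" where
  "tilt_gain L Rm Rp D1 D2 \<theta> = L * tilt_rate Rm Rp \<theta> - \<theta> * (if 0 \<le> \<theta> then D1 else D2)"

definition rate_bound :: "real \<Rightarrow> real \<Rightarrow> real \<Rightarrow> real \<Rightarrow> real \<Rightarrow> real" where
  "rate_bound L Rm Rp D1 D2 =
    (if 2 * Rm * L > D1 then (sqrt (2 * Rm * L) - sqrt D1)\<^sup>2
     else if D2 > 2 * Rp * L then (sqrt (2 * Rp * L) - sqrt D2)\<^sup>2
     else 0)"

lemma EXp_eq_rate_bound:
  "EXp I F T = rate_bound (Sup I - Inf I) (RXm I F T) (RXp I F T)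
                 (xp (Sup I) F - xm (Inf I) F) (xm (Sup I) F - xp (Inf I) F)"
  unfolding EXp_def rate_bound_def Let_def ..

lemma EYp_eq_rate_bound:
  "EYp I F T = rate_bound (Sup I - Inf I) (RYm I F T) (RYp I F T)
                 (yp (Sup I) F - ym (Inf I) F) (ym (Sup I) F - yp (Inf I) F)"
  unfolding EYp_def rate_bound_def Let_def ..

lemma tilt_rate_le:
  assumes "Rm \<le> R" "R \<le> Rp" "\<theta> > -1"
  shows "tilt_rate Rm Rp \<theta> \<le> 2 * R * \<theta> / (1 + \<theta>)"
proof (cases "0 \<le> \<theta>")
  case True
  hence "0 \<le> \<theta> / (1 + \<theta>)" using assms by simp
  hence "2 * Rm * (\<theta> / (1 + \<theta>)) \<le> 2 * R * (\<theta> / (1 + \<theta>))" using assms by (intro mult_right_mono) auto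
  thus ?thesis using True by (simp add: tilt_rate_def)
next
  case False
  hence "\<theta> / (1 + \<theta>) \<le> 0" using assms by (simp add: divide_nonpos_pos)
  hence "2 * Rp * (\<theta> / (1 + \<theta>)) \<le> 2 * R * (\<theta> / (1 + \<theta>))" using assms by (intro mult_right_mono_neg) auto
  thus ?thesis using False by (simp add: tilt_rate_def)
qed

lemma tilt_displacement_le:
  fixes D1 D2 \<Delta> \<theta> :: real
  assumes "D2 \<le> \<Delta>" "\<Delta> \<le> D1"
  shows "\<theta> * \<Delta> \<le> \<theta> * (if 0 \<le> \<theta> then D1 else D2)"
  using assms by (cases "0 \<le> \<theta>") (auto intro: mult_left_mono mult_left_mono_neg)

lemma tilt_gain_optimum_nonneg:
  assumes "0 < D1" "D1 < 2 * Rm * L"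
  defines "\<theta> \<equiv> sqrt (2 * Rm * L) / sqrt D1 - 1"
  shows "\<theta> > 0" "tilt_gain L Rm Rp D1 D2 \<theta> = (sqrt (2 * Rm * L) - sqrt D1)\<^sup>2"
proof -
  define s where "s = sqrt (2 * Rm * L)"
  define d where "d = sqrt D1"
  have "0 \<le> 2 * Rm * L" using assms(1,2) by linarith
  hence s: "s\<^sup>2 = 2 * Rm * L" and d: "d > 0" "d\<^sup>2 = D1"
    using assms(1) by (simp_all add: s_def d_def)
  have "d < s" using assms(2) by (simp add: s_def d_def real_sqrt_less_iff)
  have \<theta>: "\<theta> = s / d - 1" unfolding \<theta>_def s_def d_def ..
  show "\<theta> > 0" using d \<open>d < s\<close> unfolding \<theta> by (simp add: field_simps)
  hence "tilt_gain L Rm Rp D1 D2 \<theta> = s\<^sup>2 * \<theta> / (1 + \<theta>) - \<theta> * d\<^sup>2"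
    unfolding tilt_gain_def tilt_rate_def s d by (simp add: algebra_simps)
  also have "\<dots> = (s - d)\<^sup>2"
    using d \<open>d < s\<close> unfolding \<theta> by (simp add: field_simps power2_eq_square)
  finally show "tilt_gain L Rm Rp D1 D2 \<theta> = (sqrt (2 * Rm * L) - sqrt D1)\<^sup>2"
    by (simp add: s_def d_def)
qed

lemma tilt_gain_optimum_neg:
  assumes "0 < 2 * Rp * L" "2 * Rp * L < D2"
  defines "\<theta> \<equiv> sqrt (2 * Rp * L) / sqrt D2 - 1"
  shows "-1 < \<theta>" "\<theta> < 0" "tilt_gain L Rm Rp D1 D2 \<theta> = (sqrt (2 * Rp * L) - sqrt D2)\<^sup>2"
proof -
  define s where "s = sqrt (2 * Rp * L)"
  define d where "d = sqrt D2"
  have "0 < D2" using assms(1,2) by linarith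
  hence s: "s > 0" "s\<^sup>2 = 2 * Rp * L" and d: "d > 0" "d\<^sup>2 = D2"
    using assms(1) by (simp_all add: s_def d_def)
  have "s < d" using assms(2) by (simp add: s_def d_def real_sqrt_less_iff)
  have \<theta>: "\<theta> = s / d - 1" unfolding \<theta>_def s_def d_def ..
  show "-1 < \<theta>" "\<theta> < 0" using s d \<open>s < d\<close> unfolding \<theta> by (simp_all add: field_simps)
  hence "tilt_gain L Rm Rp D1 D2 \<theta> = s\<^sup>2 * \<theta> / (1 + \<theta>) - \<theta> * d\<^sup>2"
    unfolding tilt_gain_def tilt_rate_def s d by (simp add: algebra_simps)
  also have "\<dots> = (s - d)\<^sup>2"
    using s(1) d(1) unfolding \<theta> by (simp add: field_simps power2_eq_square)
  finally show "tilt_gain L Rm Rp D1 D2 \<theta> = (sqrt (2 * Rp * L) - sqrt D2)\<^sup>2"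
    by (simp add: s_def d_def)
qed

text \<open>With no displacement to pay for, the gain \<open>2 Rm L \<theta> / (1 + \<theta>)\<close> only approaches its
  supremum \<open>2 Rm L\<close> as \<open>\<theta> \<rightarrow> \<infinity>\<close>.\<close>
lemma tilt_gain_approx_zero_displacement:
  assumes "0 < 2 * Rm * L" "\<epsilon> > 0"
  shows "\<exists>\<theta>>0. 2 * Rm * L - \<epsilon> \<le> tilt_gain L Rm Rp 0 D2 \<theta>"
proof (intro exI conjI)
  define \<theta> where "\<theta> = 2 * Rm * L / \<epsilon>"
  show "\<theta> > 0" unfolding \<theta>_def using assms by simp
  have "tilt_gain L Rm Rp 0 D2 \<theta> = 2 * Rm * L - 2 * Rm * L * \<epsilon> / (\<epsilon> + 2 * Rm * L)"
    unfolding tilt_gain_def tilt_rate_def \<theta>_def using assms by (simp add: field_simps)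
  moreover have "2 * Rm * L * \<epsilon> / (\<epsilon> + 2 * Rm * L) \<le> \<epsilon>" using assms by (simp add: field_simps)
  ultimately show "2 * Rm * L - \<epsilon> \<le> tilt_gain L Rm Rp 0 D2 \<theta>" by simp
qed

lemma tilt_gain_approx_rate_bound:
  fixes L Rm Rp D1 D2 \<epsilon> :: real
  assumes L: "L > 0" and Rp: "Rp > 0" and D1: "D1 \<ge> 0" and \<epsilon>: "\<epsilon> > 0"
  shows "\<exists>\<theta>>-1. rate_bound L Rm Rp D1 D2 - \<epsilon> \<le> tilt_gain L Rm Rp D1 D2 \<theta>"
proof -
  consider "D1 = 0" "D1 < 2 * Rm * L" | "0 < D1" "D1 < 2 * Rm * L"
    | "2 * Rm * L \<le> D1" "2 * Rp * L < D2" | "2 * Rm * L \<le> D1" "D2 \<le> 2 * Rp * L"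
    using D1 by linarith
  thus ?thesis
  proof cases
    case 1
    with tilt_gain_approx_zero_displacement[OF _ \<epsilon>, of Rm L Rp D2] show ?thesis
      by (force simp: rate_bound_def)
  next
    case 2
    note opt = tilt_gain_optimum_nonneg[OF 2]
    have "-1 < sqrt (2 * Rm * L) / sqrt D1 - 1" using opt(1) by linarith
    with opt(2) 2 \<epsilon> show ?thesis
      by (intro exI[of _ "sqrt (2 * Rm * L) / sqrt D1 - 1"]) (auto simp: rate_bound_def)
  next
    case 3
    have "0 < 2 * Rp * L" using L Rp by simp
    note opt = tilt_gain_optimum_neg[OF this 3(2)]
    with 3 \<epsilon> show ?thesis
      by (intro exI[of _ "sqrt (2 * Rp * L) / sqrt D2 - 1"] conjI) (simp_all add: rate_bound_def)
  next
    case 4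
    thus ?thesis using \<epsilon> by (intro exI[of _ 0]) (simp add: tilt_gain_def tilt_rate_def rate_bound_def)
  qed
qed

definition x_gain :: "real set \<Rightarrow> path2 set \<Rightarrow> real \<Rightarrow> real \<Rightarrow> real" where
  "x_gain I F T \<theta> = tilt_gain (Sup I - Inf I) (RXm I F T) (RXp I F T)
                       (xp (Sup I) F - xm (Inf I) F) (xm (Sup I) F - xp (Inf I) F) \<theta>"

definition y_gain :: "real set \<Rightarrow> path2 set \<Rightarrow> real \<Rightarrow> real \<Rightarrow> real" where
  "y_gain I F T \<theta> = tilt_gain (Sup I - Inf I) (RYm I F T) (RYp I F T)
                       (yp (Sup I) F - ym (Inf I) F) (ym (Sup I) F - yp (Inf I) F) \<theta>"

lemma EXp_approx_x_gain:
  assumes "Inf I < Sup I" "0 < RXp I F T" "0 \<le> xp (Sup I) F - xm (Inf I) F" "\<epsilon> > 0"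
  shows "\<exists>\<theta>>-1. EXp I F T - \<epsilon> \<le> x_gain I F T \<theta>"
  unfolding EXp_eq_rate_bound x_gain_def using assms by (intro tilt_gain_approx_rate_bound) auto

lemma EYp_approx_y_gain:
  assumes "Inf I < Sup I" "0 < RYp I F T" "0 \<le> yp (Sup I) F - ym (Inf I) F" "\<epsilon> > 0"
  shows "\<exists>\<theta>>-1. EYp I F T - \<epsilon> \<le> y_gain I F T \<theta>"
  unfolding EYp_eq_rate_bound y_gain_def using assms by (intro tilt_gain_approx_rate_bound) auto

section \<open>Paths of \<open>GG M T\<close>\<close>

lemma GG_bounds:
  assumes "h \<in> GG M T" "1 \<le> T" "0 \<le> M" "s \<in> {0..1}"
  shows "0 \<le> h s" "h s \<le> 3 * M"
proof -
  have "mono_on {0..1} h" "h 0 = 0" using assms(1) unfolding GG_def EE_def by auto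
  thus "0 \<le> h s" using assms(4) by (metis atLeastAtMost_iff mono_onD order.refl zero_le_one)
  have "1 \<le> T powr (2/3)" using assms(2) by (intro ge_one_powr_ge_zero) auto
  hence "T powr (-2/3) \<le> 1" by (simp add: powr_minus_divide divide_le_eq)
  hence "M * (s + 2 * T powr (-2/3)) \<le> M * 3" using assms(3,4) by (intro mult_left_mono) auto
  moreover have "h s \<le> M * (s + 2 * T powr (-2/3))" using assms(1,4) unfolding GG_def by auto
  ultimately show "h s \<le> 3 * M" by simp
qed

context
  fixes M T :: real and F :: "path2 set"
  assumes F_GG: "F \<subseteq> GG M T \<times> GG M T" and T_ge_1: "1 \<le> T" and M_nonneg: "0 \<le> M"
begin

lemma family_mono:
  assumes "g \<in> F"
  shows "mono_on {0..1} (fst g)" "mono_on {0..1} (snd g)"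
  using assms F_GG unfolding GG_def EE_def by auto

lemma family_bounds:
  assumes "g \<in> F" "s \<in> {0..1}"
  shows "0 \<le> fst g s" "fst g s \<le> 3 * M" "0 \<le> snd g s" "snd g s \<le> 3 * M"
proof -
  have "fst g \<in> GG M T" "snd g \<in> GG M T" using assms(1) F_GG by auto
  from GG_bounds[OF this(1) T_ge_1 M_nonneg assms(2)] GG_bounds[OF this(2) T_ge_1 M_nonneg assms(2)]
  show "0 \<le> fst g s" "fst g s \<le> 3 * M" "0 \<le> snd g s" "snd g s \<le> 3 * M" by auto
qed

lemma nonneg_pt_scaled:
  assumes "g \<in> F" "s \<in> {0..1}"
  shows "nonneg_pt (T *\<^sub>R at2 g s)"
  using family_bounds[OF assms] T_ge_1 by (simp add: nonneg_pt_def at2_def)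

lemma RX_RY_scaled_bounds:
  assumes "g \<in> F" "s \<in> {0..1}"
  shows "0 < RX (T *\<^sub>R at2 g s)" "RX (T *\<^sub>R at2 g s) \<le> T * (3 * M) + 1"
    "0 < RY (T *\<^sub>R at2 g s)" "RY (T *\<^sub>R at2 g s) \<le> T * (3 * M) + 1"
proof -
  have "fst (T *\<^sub>R at2 g s) \<le> T * (3 * M)" "snd (T *\<^sub>R at2 g s) \<le> T * (3 * M)"
    using family_bounds[OF assms] T_ge_1 by (simp_all add: at2_def mult_left_mono)
  from RX_RY_bounds[OF nonneg_pt_scaled[OF assms] this]
  show "0 < RX (T *\<^sub>R at2 g s)" "RX (T *\<^sub>R at2 g s) \<le> T * (3 * M) + 1"
    "0 < RY (T *\<^sub>R at2 g s)" "RY (T *\<^sub>R at2 g s) \<le> T * (3 * M) + 1" by auto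
qed

lemma rates_in_range:
  assumes "I \<subseteq> {0..1}" "g \<in> F" "s \<in> I"
  shows "RXm I F T \<le> RX (T *\<^sub>R at2 g s)" "RX (T *\<^sub>R at2 g s) \<le> RXp I F T"
    "RYm I F T \<le> RY (T *\<^sub>R at2 g s)" "RY (T *\<^sub>R at2 g s) \<le> RYp I F T"
proof -
  have b: "0 < RX (T *\<^sub>R at2 g s) \<and> RX (T *\<^sub>R at2 g s) \<le> T * (3 * M) + 1 \<and>
           0 < RY (T *\<^sub>R at2 g s) \<and> RY (T *\<^sub>R at2 g s) \<le> T * (3 * M) + 1"
    if "s \<in> I" "g \<in> F" for s g
    using RX_RY_scaled_bounds[of g s] that assms(1) by auto
  have "bdd_below {RX (T *\<^sub>R at2 g s) | s g. s \<in> I \<and> g \<in> F}"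
    "bdd_above {RX (T *\<^sub>R at2 g s) | s g. s \<in> I \<and> g \<in> F}"
    "bdd_below {RY (T *\<^sub>R at2 g s) | s g. s \<in> I \<and> g \<in> F}"
    "bdd_above {RY (T *\<^sub>R at2 g s) | s g. s \<in> I \<and> g \<in> F}"
    by (intro bdd_belowI[of _ 0] bdd_aboveI[of _ "T * (3 * M) + 1"]; use b in force)+
  moreover have "RX (T *\<^sub>R at2 g s) \<in> {RX (T *\<^sub>R at2 g s) | s g. s \<in> I \<and> g \<in> F}"
    "RY (T *\<^sub>R at2 g s) \<in> {RY (T *\<^sub>R at2 g s) | s g. s \<in> I \<and> g \<in> F}"
    using assms by blast+
  ultimately show "RXm I F T \<le> RX (T *\<^sub>R at2 g s)" "RX (T *\<^sub>R at2 g s) \<le> RXp I F T"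
    "RYm I F T \<le> RY (T *\<^sub>R at2 g s)" "RY (T *\<^sub>R at2 g s) \<le> RYp I F T"
    unfolding RXm_def RXp_def RYm_def RYp_def by (auto intro: cInf_lower cSup_upper)
qed

lemma coords_in_range:
  assumes "g \<in> F" "s \<in> {0..1}"
  shows "xm s F \<le> fst g s" "fst g s \<le> xp s F" "ym s F \<le> snd g s" "snd g s \<le> yp s F"
proof -
  have "bdd_below {fst g s | g. g \<in> F}" "bdd_above {fst g s | g. g \<in> F}"
    "bdd_below {snd g s | g. g \<in> F}" "bdd_above {snd g s | g. g \<in> F}"
    by (intro bdd_belowI[of _ 0] bdd_aboveI[of _ "3 * M"]; use family_bounds[OF _ assms(2)] in force)+
  moreover have "fst g s \<in> {fst g s | g. g \<in> F}" "snd g s \<in> {snd g s | g. g \<in> F}"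
    using assms by blast+
  ultimately show "xm s F \<le> fst g s" "fst g s \<le> xp s F" "ym s F \<le> snd g s" "snd g s \<le> yp s F"
    unfolding xm_def xp_def ym_def yp_def by (auto intro: cInf_lower cSup_upper)
qed

lemma RXp_RYp_pos:
  assumes "I \<subseteq> {0..1}" "s \<in> I" "g \<in> F"
  shows "0 < RXp I F T" "0 < RYp I F T"
proof -
  have "s \<in> {0..1}" using assms by auto
  with rates_in_range[OF assms(1,3,2)] RX_RY_scaled_bounds[OF assms(3) this]
  show "0 < RXp I F T" "0 < RYp I F T" by linarith+
qed

lemma displacement_nonneg:
  assumes "g \<in> F" "0 \<le> s" "s \<le> s'" "s' \<le> 1"
  shows "0 \<le> xp s' F - xm s F" "0 \<le> yp s' F - ym s F"
proof -
  have "fst g s \<le> fst g s'" "snd g s \<le> snd g s'"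
    using family_mono[OF assms(1)] assms(2-4) by (auto elim!: mono_onD)
  thus "0 \<le> xp s' F - xm s F" "0 \<le> yp s' F - ym s F"
    using coords_in_range[OF assms(1), of s] coords_in_range[OF assms(1), of s'] assms(2-4) by auto
qed

lemma x_gain_le_path_exponent:
  assumes "g \<in> F" "0 \<le> lo" "lo \<le> hi" "hi \<le> 1"
  shows "x_gain {lo..hi} F T \<theta>
           \<le> (hi - lo) * tilt_rate (RXm {lo..hi} F T) (RXp {lo..hi} F T) \<theta> - \<theta> * (fst g hi - fst g lo)"
proof -
  have "lo \<in> {0..1}" "hi \<in> {0..1}" using assms(2-4) by auto
  note range = coords_in_range[OF assms(1)]
  have "xm hi F - xp lo F \<le> fst g hi - fst g lo" "fst g hi - fst g lo \<le> xp hi F - xm lo F"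
    using range(1)[OF \<open>lo \<in> {0..1}\<close>] range(2)[OF \<open>lo \<in> {0..1}\<close>]
      range(1)[OF \<open>hi \<in> {0..1}\<close>] range(2)[OF \<open>hi \<in> {0..1}\<close>] by linarith+
  moreover have "Sup {lo..hi} = hi" "Inf {lo..hi} = lo" using assms(3) by simp_all
  ultimately show ?thesis
    unfolding x_gain_def tilt_gain_def using tilt_displacement_le by simp
qed

lemma y_gain_le_path_exponent:
  assumes "g \<in> F" "0 \<le> lo" "lo \<le> hi" "hi \<le> 1"
  shows "y_gain {lo..hi} F T \<theta>
           \<le> (hi - lo) * tilt_rate (RYm {lo..hi} F T) (RYp {lo..hi} F T) \<theta> - \<theta> * (snd g hi - snd g lo)"
proof -
  have "lo \<in> {0..1}" "hi \<in> {0..1}" using assms(2-4) by auto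
  note range = coords_in_range[OF assms(1)]
  have "ym hi F - yp lo F \<le> snd g hi - snd g lo" "snd g hi - snd g lo \<le> yp hi F - ym lo F"
    using range(3)[OF \<open>lo \<in> {0..1}\<close>] range(4)[OF \<open>lo \<in> {0..1}\<close>]
      range(3)[OF \<open>hi \<in> {0..1}\<close>] range(4)[OF \<open>hi \<in> {0..1}\<close>] by linarith+
  moreover have "Sup {lo..hi} = hi" "Inf {lo..hi} = lo" using assms(3) by simp_all
  ultimately show ?thesis
    unfolding y_gain_def tilt_gain_def using tilt_displacement_le by simp
qed

end

section \<open>The upper bound\<close>

lemma (in tilting) block_rate_ge_tilt_rates:
  assumes "F \<subseteq> GG M T \<times> GG M T" "1 \<le> T" "0 \<le> M"
    and "I \<subseteq> {0..1}" "g \<in> F" "s \<in> I" "j \<in> J"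
  shows "tilt_rate (RXm I F T) (RXp I F T) (th j) + tilt_rate (RYm I F T) (RYp I F T) (ph j)
         \<le> block_rate j (T *\<^sub>R at2 g s)"
  unfolding block_rate_def using rates_in_range[OF assms(1-6)] th_gt[OF assms(7)] ph_gt[OF assms(7)]
  by (intro add_mono tilt_rate_le) auto

lemma (in tilting) scaled_tilt_prod_lower_bound:
  fixes lo hi :: "int \<Rightarrow> real"
  assumes F_GG: "F \<subseteq> GG M T \<times> GG M T" and T: "1 \<le> T" and M: "0 \<le> M"
    and ab: "0 \<le> a" "a \<le> b" "b \<le> 1" and H: "H = (b - a) * T"
    and sb: "\<And>j. sb j = T * (lo j - a)" and eb: "\<And>j. eb j = T * (hi j - a)"
    and cells: "\<And>j. j \<in> J \<Longrightarrow> a \<le> lo j \<and> lo j \<le> hi j \<and> hi j \<le> b"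
    and g: "g \<in> F" and steps: "\<forall>i. 0 < fst (\<omega> i) \<and> 0 < snd (snd (\<omega> i))"
    and path: "\<forall>s\<in>{a..b}. (1 / T) *\<^sub>R xi (T *\<^sub>R z) \<omega> ((s - a) * T) = at2 g s"
  shows "\<forall>\<^sub>F K in sequentially.
           exp (T * (\<Sum>j\<in>J. x_gain {lo j..hi j} F T (th j) + y_gain {lo j..hi j} F T (ph j)))
           \<le> tilt_prod K (T *\<^sub>R z) 0 \<omega>"
proof -
  have T0: "T > 0" using T by simp
  define I where "I j = {lo j..hi j}" for j
  define lb where "lb j = tilt_rate (RXm (I j) F T) (RXp (I j) F T) (th j)
                        + tilt_rate (RYm (I j) F T) (RYp (I j) F T) (ph j)" for j
  have rate: "lb j \<le> block_rate j (T *\<^sub>R at2 g (a + r / T))"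
    if j: "j \<in> J" and r: "sb j < r" "r < eb j" for j r
    unfolding lb_def using cells[OF j] ab r T0
    by (intro block_rate_ge_tilt_rates[OF F_GG T M _ g _ j]) (auto simp: I_def sb eb field_simps)
  interpret P: tilted_path J sb eb th ph H "T *\<^sub>R z" \<omega> "\<lambda>r. T *\<^sub>R at2 g (a + r / T)" lb
    using cells T0
    by (intro tilted_path_scaled[OF T0 ab H family_mono[OF F_GG T M g]
          nonneg_pt_scaled[OF F_GG T M g] steps path] rate)
       (auto simp: sb eb H intro: mult_left_mono)
  have "T * (x_gain (I j) F T (th j) + y_gain (I j) F T (ph j)) \<le> P.block_exponent j"
    if j: "j \<in> J" for j
  proof -
    have lohi: "0 \<le> lo j" "lo j \<le> hi j" "hi j \<le> 1" using cells[OF j] ab by auto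
    have "T * (x_gain (I j) F T (th j) + y_gain (I j) F T (ph j))
        \<le> T * ((hi j - lo j) * tilt_rate (RXm (I j) F T) (RXp (I j) F T) (th j)
                 - th j * (fst g (hi j) - fst g (lo j))
               + ((hi j - lo j) * tilt_rate (RYm (I j) F T) (RYp (I j) F T) (ph j)
                 - ph j * (snd g (hi j) - snd g (lo j))))"
      unfolding I_def using T0
      by (intro mult_left_mono add_mono x_gain_le_path_exponent[OF F_GG T M g lohi]
          y_gain_le_path_exponent[OF F_GG T M g lohi]) auto
    also have "\<dots> = P.block_exponent j"
    proof -
      have "a + sb j / T = lo j" "a + eb j / T = hi j" using T0 by (simp_all add: sb eb)
      thus ?thesis unfolding P.block_exponent_def lb_def by (simp add: at2_def sb eb algebra_simps)
    qed
    finally show ?thesis .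
  qed
  hence "T * (\<Sum>j\<in>J. x_gain (I j) F T (th j) + y_gain (I j) F T (ph j))
         \<le> (\<Sum>j\<in>J. P.block_exponent j)"
    unfolding sum_distrib_left by (rule sum_mono)
  hence le: "exp (T * (\<Sum>j\<in>J. x_gain {lo j..hi j} F T (th j) + y_gain {lo j..hi j} F T (ph j)))
             \<le> exp (\<Sum>j\<in>J. P.block_exponent j)"
    unfolding I_def by simp
  show ?thesis using P.tilt_prod_lower_bound by (rule eventually_mono) (rule order.trans[OF le])
qed

lemma cond_prob_le_tilt_gains:
  fixes lo hi th ph :: "int \<Rightarrow> real"
  assumes F_GG: "F \<subseteq> GG M T \<times> GG M T" and T: "1 \<le> T" and M: "0 \<le> M"
    and ab: "0 \<le> a" "a \<le> b" "b \<le> 1"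
    and J: "finite J"
    and cells: "\<And>j. j \<in> J \<Longrightarrow> a \<le> lo j \<and> lo j \<le> hi j \<and> hi j \<le> b"
    and disjoint: "\<And>i j. i \<in> J \<Longrightarrow> j \<in> J \<Longrightarrow> i \<noteq> j \<Longrightarrow> hi i \<le> lo j \<or> hi j \<le> lo i"
    and th: "\<And>j. j \<in> J \<Longrightarrow> th j > -1" and ph: "\<And>j. j \<in> J \<Longrightarrow> ph j > -1"
  shows "cond_prob T a b z F
           \<le> exp (- T * (\<Sum>j\<in>J. x_gain {lo j..hi j} F T (th j) + y_gain {lo j..hi j} F T (ph j)))"
proof -
  define sb where "sb j = T * (lo j - a)" for j
  define eb where "eb j = T * (hi j - a)" for j
  interpret tilting J sb eb th ph "(b - a) * T"
  proof
    fix i j assume "i \<in> J" "j \<in> J" "i \<noteq> j"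
    thus "eb i \<le> sb j \<or> eb j \<le> sb i" using disjoint T by (auto simp: sb_def eb_def)
  qed (use J th ph in auto)
  have "measure QQ {\<omega> \<in> space QQ. \<exists>g\<in>F. \<forall>s\<in>{a..b}.
                      (1 / T) *\<^sub>R xi (T *\<^sub>R z) \<omega> ((s - a) * T) = at2 g s}
        \<le> 1 / exp (T * (\<Sum>j\<in>J. x_gain {lo j..hi j} F T (th j) + y_gain {lo j..hi j} F T (ph j)))"
  proof (rule measure_le_inverse_tilt_prod)
    fix \<omega> assume "\<omega> \<in> {\<omega> \<in> space QQ. \<exists>g\<in>F. \<forall>s\<in>{a..b}.
                           (1 / T) *\<^sub>R xi (T *\<^sub>R z) \<omega> ((s - a) * T) = at2 g s}"
      and "\<forall>i. 0 < fst (\<omega> i) \<and> 0 < snd (snd (\<omega> i))"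
    thus "\<forall>\<^sub>F K in sequentially.
            exp (T * (\<Sum>j\<in>J. x_gain {lo j..hi j} F T (th j) + y_gain {lo j..hi j} F T (ph j)))
            \<le> tilt_prod K (T *\<^sub>R z) 0 \<omega>"
      using scaled_tilt_prod_lower_bound[OF F_GG T M ab refl sb_def eb_def cells] by blast
  qed simp
  thus ?thesis unfolding cond_prob_def by (simp add: exp_minus inverse_eq_divide)
qed

lemma cond_prob_le_exp_rate_slack:
  fixes lo hi :: "int \<Rightarrow> real"
  assumes F_GG: "F \<subseteq> GG M T \<times> GG M T" and T: "1 \<le> T" and M: "0 \<le> M"
    and ab: "0 \<le> a" "a \<le> b" "b \<le> 1"
    and J: "finite J"
    and cells: "\<And>j. j \<in> J \<Longrightarrow> a \<le> lo j \<and> lo j < hi j \<and> hi j \<le> b"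
    and disjoint: "\<And>i j. i \<in> J \<Longrightarrow> j \<in> J \<Longrightarrow> i \<noteq> j \<Longrightarrow> hi i \<le> lo j \<or> hi j \<le> lo i"
    and g: "g \<in> F" and \<epsilon>: "\<epsilon> > 0"
  shows "cond_prob T a b z F
           \<le> exp (- T * (\<Sum>j\<in>J. EXp {lo j..hi j} F T + EYp {lo j..hi j} F T) + T * (2 * card J) * \<epsilon>)"
    (is "_ \<le> exp (- T * ?E + _)")
proof -
  have "\<exists>\<theta>>-1. EXp {lo j..hi j} F T - \<epsilon> \<le> x_gain {lo j..hi j} F T \<theta>"
    "\<exists>\<theta>>-1. EYp {lo j..hi j} F T - \<epsilon> \<le> y_gain {lo j..hi j} F T \<theta>" if j: "j \<in> J" for j
  proof -
    have lohi: "0 \<le> lo j" "lo j < hi j" "hi j \<le> 1" using cells[OF j] ab by auto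
    hence "{lo j..hi j} \<subseteq> {0..1}" "lo j \<in> {lo j..hi j}" by auto
    note pos = RXp_RYp_pos[OF F_GG T M this g]
      and disp = displacement_nonneg[OF F_GG T M g lohi(1) _ lohi(3)]
    show "\<exists>\<theta>>-1. EXp {lo j..hi j} F T - \<epsilon> \<le> x_gain {lo j..hi j} F T \<theta>"
      using lohi pos disp \<epsilon> by (intro EXp_approx_x_gain) auto
    show "\<exists>\<theta>>-1. EYp {lo j..hi j} F T - \<epsilon> \<le> y_gain {lo j..hi j} F T \<theta>"
      using lohi pos disp \<epsilon> by (intro EYp_approx_y_gain) auto
  qed
  then obtain th ph where
    th: "\<And>j. j \<in> J \<Longrightarrow> th j > -1 \<and> EXp {lo j..hi j} F T - \<epsilon> \<le> x_gain {lo j..hi j} F T (th j)" and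
    ph: "\<And>j. j \<in> J \<Longrightarrow> ph j > -1 \<and> EYp {lo j..hi j} F T - \<epsilon> \<le> y_gain {lo j..hi j} F T (ph j)"
    by metis
  have "?E - 2 * card J * \<epsilon> = (\<Sum>j\<in>J. (EXp {lo j..hi j} F T - \<epsilon>) + (EYp {lo j..hi j} F T - \<epsilon>))"
    by (simp add: sum_subtractf sum.distrib)
  also have "\<dots> \<le> (\<Sum>j\<in>J. x_gain {lo j..hi j} F T (th j) + y_gain {lo j..hi j} F T (ph j))"
    using th ph by (intro sum_mono add_mono) auto
  finally have "T * (?E - 2 * card J * \<epsilon>)
      \<le> T * (\<Sum>j\<in>J. x_gain {lo j..hi j} F T (th j) + y_gain {lo j..hi j} F T (ph j))"
    using T by (intro mult_left_mono) auto
  hence "- T * (\<Sum>j\<in>J. x_gain {lo j..hi j} F T (th j) + y_gain {lo j..hi j} F T (ph j))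
         \<le> - T * ?E + T * (2 * card J) * \<epsilon>"
    by (simp add: algebra_simps)
  moreover have "cond_prob T a b z F \<le> exp (- T * (\<Sum>j\<in>J. x_gain {lo j..hi j} F T (th j)
                                                       + y_gain {lo j..hi j} F T (ph j)))"
    using cells th ph
    by (intro cond_prob_le_tilt_gains[OF F_GG T M ab J _ disjoint]) (auto simp: less_imp_le)
  ultimately show ?thesis by (meson exp_le_cancel_iff order.trans)
qed

lemma cond_prob_le_exp_rate:
  fixes lo hi :: "int \<Rightarrow> real"
  assumes F_GG: "F \<subseteq> GG M T \<times> GG M T" and T: "1 \<le> T" and M: "0 \<le> M"
    and ab: "0 \<le> a" "a \<le> b" "b \<le> 1"
    and J: "finite J"
    and cells: "\<And>j. j \<in> J \<Longrightarrow> a \<le> lo j \<and> lo j < hi j \<and> hi j \<le> b"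
    and disjoint: "\<And>i j. i \<in> J \<Longrightarrow> j \<in> J \<Longrightarrow> i \<noteq> j \<Longrightarrow> hi i \<le> lo j \<or> hi j \<le> lo i"
  shows "cond_prob T a b z F \<le> exp (- T * (\<Sum>j\<in>J. EXp {lo j..hi j} F T + EYp {lo j..hi j} F T))"
    (is "_ \<le> exp (- T * ?E)")
proof (cases "F = {}")
  case True
  thus ?thesis by (simp add: cond_prob_def)
next
  case False
  then obtain g where g: "g \<in> F" by blast
  show ?thesis
  proof (rule tendsto_lowerbound)
    show "((\<lambda>\<epsilon>. exp (- T * ?E + T * (2 * card J) * \<epsilon>)) \<longlongrightarrow> exp (- T * ?E)) (at_right 0)"
      by (auto intro!: tendsto_eq_intros)
    show "\<forall>\<^sub>F \<epsilon> in at_right 0. cond_prob T a b z F \<le> exp (- T * ?E + T * (2 * card J) * \<epsilon>)"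
      using eventually_at_right_less[of 0] by (rule eventually_mono)
        (rule cond_prob_le_exp_rate_slack[OF assms g])
  qed simp
qed

lemma grid_cell_nonempty:
  fixes n :: nat and j :: int and a b :: real
  assumes n: "n > 0" and ab: "a < b" and j: "j \<in> {\<lfloor>a * n\<rfloor>..\<lceil>b * n\<rceil> - 1}"
  shows "max (real_of_int j / n) a < min ((real_of_int j + 1) / n) b"
proof -
  have "\<lfloor>a * n\<rfloor> \<le> j" "j \<le> \<lceil>b * n\<rceil> - 1" using j by auto
  hence "a * n < real_of_int j + 1" "real_of_int j < b * n" by linarith+
  hence "a < (real_of_int j + 1) / n" "real_of_int j / n < b" using n by (simp_all add: field_simps)
  moreover have "real_of_int j / n < (real_of_int j + 1) / n" using n by (simp add: divide_strict_right_mono)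
  ultimately show ?thesis using ab by simp
qed

lemma grid_cells_disjoint:
  fixes n :: nat and i j :: int and a b :: real
  assumes "n > 0" "i < j"
  shows "min ((real_of_int i + 1) / n) b \<le> max (real_of_int j / n) a"
proof -
  have "real_of_int i + 1 \<le> real_of_int j" using assms(2) by linarith
  hence "(real_of_int i + 1) / n \<le> real_of_int j / n" using assms(1) by (simp add: divide_right_mono)
  thus ?thesis by linarith
qed

theorem proposition3p11:
  fixes f :: path2 and n :: nat and T M a b :: real and z :: pt
  assumes "fst f \<in> EE" and "snd f \<in> EE"
    and "T > 1" and "M > 1"
    and "0 \<le> a" and "a < b" and "b \<le> 1"
    and "mnorm (z - at2 f a) < 1 / (real n)^2"
  shows "cond_prob T a b z (Lam M T f n)
    \<le> exp (- T * (\<Sum>j\<in>{\<lfloor>a * n\<rfloor>..\<lceil>b * n\<rceil> - 1}.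
          EXp ({real_of_int j / n .. (real_of_int j + 1) / n} \<inter> {a..b}) (Lam M T f n) T
        + EYp ({real_of_int j / n .. (real_of_int j + 1) / n} \<inter> {a..b}) (Lam M T f n) T))"
proof -
  \<comment> \<open>the hypothesis on \<open>z\<close> only rules out \<open>n = 0\<close>; the bound holds for every starting point\<close>
  have n: "n > 0"
  proof (rule ccontr)
    assume "\<not> n > 0"
    with assms(8) show False by (simp add: mnorm_def)
  qed
  define lo where "lo j = max (real_of_int j / n) a" for j :: int
  define hi where "hi j = min ((real_of_int j + 1) / n) b" for j :: int
  have "cond_prob T a b z (Lam M T f n)
    \<le> exp (- T * (\<Sum>j\<in>{\<lfloor>a * n\<rfloor>..\<lceil>b * n\<rceil> - 1}.
                    EXp {lo j..hi j} (Lam M T f n) T + EYp {lo j..hi j} (Lam M T f n) T))"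
  proof (rule cond_prob_le_exp_rate)
    show "Lam M T f n \<subseteq> GG M T \<times> GG M T" by (auto simp: Lam_def)
    show "a \<le> lo j \<and> lo j < hi j \<and> hi j \<le> b" if "j \<in> {\<lfloor>a * n\<rfloor>..\<lceil>b * n\<rceil> - 1}" for j
      using grid_cell_nonempty[OF n \<open>a < b\<close> that] by (simp add: lo_def hi_def)
    show "hi i \<le> lo j \<or> hi j \<le> lo i" if "i \<noteq> j" for i j
      using that grid_cells_disjoint[OF n, of i j] grid_cells_disjoint[OF n, of j i]
      by (auto simp: lo_def hi_def neq_iff)
  qed (use assms in auto)
  also have "\<dots> = exp (- T * (\<Sum>j\<in>{\<lfloor>a * n\<rfloor>..\<lceil>b * n\<rceil> - 1}.
          EXp ({real_of_int j / n .. (real_of_int j + 1) / n} \<inter> {a..b}) (Lam M T f n) T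
        + EYp ({real_of_int j / n .. (real_of_int j + 1) / n} \<inter> {a..b}) (Lam M T f n) T))"
    by (simp add: lo_def hi_def Int_atLeastAtMost)
  finally show ?thesis .
qed

end
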